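(* Let $0<\rho<\tfrac12$, and in the setting below assume (A.1), (A.2), (A.4), and (A.3): $r>0$ and the minimal truncation order $p^*$ and coefficients $\boldsymbol\theta^*_{p^*}\in B_{p^*,r}$ with $\mathcal R_{p^*}(\boldsymbol\theta^*_{p^*})=\inf_{p,\boldsymbol\theta_p}\mathcal R_p(\boldsymbol\theta_p)$ exist. Let $C=2(C_{\mathbf z}+e^{C_{\mathbf X}+T})$, $L(p)=\min_{\boldsymbol\theta_p\in B_{p,r}}\mathcal R_p(\boldsymbol\theta_p)$, $\widetilde{\mathcal R}^*=\mathcal R_{p^*}(\boldsymbol\theta^*_{p^*})$, and let $n_3$ be the smallest integer satisfying $$n_3\ge\left(\frac{2\sqrt{s_d(p^* )+q}}{L(p^*-1)-\widetilde{\mathcal R}^*}\big(\sqrt{e^q}C_{\mathrm{pen}}+432Cr\sqrt\pi\big)\right)^{1/\rho}.$$ Then for any $p<p^*$ and $n\ge n_3$, $$\mathbb P(\widehat p=p)\le148\exp\left(-n\frac{c_5}{4}\big(L(p)-L(p^* )-\mathrm{pen}_n(p^*,q)+\mathrm{pen}_n(p,q)\big)^2\right),\qquad c_5=\frac{1}{8r(288C^2r+C)}.$$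
   Context: Let $T>0$, integers $d\ge2$, $q\ge1$. $(\mathbf X,\mathbf z,y)$ is a random triple: $\mathbf X:[0,T]\to\mathbb R^{d-1}$ a continuous bounded-variation path with fixed initial value, $\mathbf z\in\mathbb R^q$, $y\in\{0,1\}$, with $\operatorname{logit}\mathbb P(y=1\mid\mathbf X,\mathbf z)=F(\mathbf X)+\mathbf z^\top\boldsymbol\gamma$ for a continuous functional $F$ and $\boldsymbol\gamma\in\mathbb R^q$. (A.1): $\|F\|_\infty<C_F$, $\|\boldsymbol\gamma\|_1\le C_{\boldsymbol\gamma}$. (A.2): $\|\mathbf X\|_{\mathrm{TV}}<C_{\mathbf X}$ and $\|\mathbf z\|<C_{\mathbf z}$ a.s., where $\|\mathbf X\|_{\mathrm{TV}}=\sup\sum_i\|\mathbf X_{t_{i+1}}-\mathbf X_{t_i}\|$ over partitions of $[0,T]$. Logistic loss $\ell(y,\eta)=-y\eta+\log(1+e^\eta)$. $\mathcal R^*$ = minimal population risk $\min\mathbb E[\ell(y,G(\mathbf X)+\mathbf z^\top\boldsymbol\gamma')]$ over continuous $G$ with $\|G\|_\infty\le C_F$, $\|\boldsymbol\gamma'\|_1\le C_{\boldsymbol\gamma}$. (A.4): $\mathcal R^*\le\inf_{p,\boldsymbol\theta_p}\mathcal R_p(\boldsymbol\theta_p)$. Time augmentation $\widetilde{\mathbf X}(t)=(\mathbf X(t),t)\in\mathbb R^d$; signature terms $S^I(\widetilde{\mathbf X})=\int_{0<t_1<\dots<t_k<T}d\widetilde X^{i_1}_{t_1}\cdots d\widetilde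 X^{i_k}_{t_k}$ ($I\in\{1,..,d\}^k$, empty $I$ gives 1); truncated signature $S_p(\widetilde{\mathbf X})=(S^I)_{|I|\le p}\in\mathbb R^{s_d(p)}$, $s_d(p)=\sum_{k=0}^pd^k$; $\widetilde{\mathbf S}_p(\widetilde{\mathbf X},\mathbf z)=(S_p(\widetilde{\mathbf X})^\top,\mathbf z^\top)^\top$; $\mathcal R_p(\boldsymbol\theta_p)=\mathbb E[\ell(y,\widetilde{\mathbf S}_p^\top\boldsymbol\theta_p)]$; $B_{p,r}=\{\boldsymbol\theta\in\mathbb R^{s_d(p)+q}:\|\boldsymbol\theta\|_1\le r\}$. Data: $(\mathbf X_i,\mathbf z_i,y_i)_{i=1}^n$ i.i.d. copies. $\widehat{\mathcal R}_{p,n}(\boldsymbol\theta_p)=\frac1n\sum_i\ell(y_i,\widetilde{\mathbf S}_p(\widetilde{\mathbf X}_i,\mathbf z_i)^\top\boldsymbol\theta_p)$; $\widehat{\boldsymbol\theta}_p=\arg\min_{B_{p,r}}\widehat{\mathcal R}_{p,n}$; $\widehat L_n(p)=\widehat{\mathcal R}_{p,n}(\widehat{\boldsymbol\theta}_p)$. Penalty $\mathrm{pen}_n(p,q)=C_{\mathrm{pen}}\sqrt{s_d(p)e^q}/n^\rho$ with constant $C_{\mathrm{pen}}>0$. $\widehat p=\min\{\arg\min_{p\in\mathbb N}(\widehat L_n(p)+\mathrm{pen}_n(p,q))\}$. *)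

theory Defs
  imports "HOL-Probability.Probability"
begin

text \<open>Paths in R^(d-1) are encoded as functions real => nat => real; only the
coordinates i < d-1 and times in [0,T] are meaningful.  Vectors in R^q are
functions nat => real, only coordinates j < q are meaningful.\<close>

type_synonym path = "real \<Rightarrow> nat \<Rightarrow> real"

definition vnorm :: "nat \<Rightarrow> (nat \<Rightarrow> real) \<Rightarrow> real" where
  "vnorm k v = sqrt (\<Sum>i<k. (v i)\<^sup>2)"

definition partition_of :: "real \<Rightarrow> real \<Rightarrow> nat \<Rightarrow> (nat \<Rightarrow> real) \<Rightarrow> bool" where
  "partition_of a b m t \<longleftrightarrow> t 0 = a \<and> t m = b \<and> (\<forall>i<m. t i \<le> t (Suc i))"

definition tv :: "nat \<Rightarrow> real \<Rightarrow> path \<Rightarrow> ereal" where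
  "tv d T X = (SUP mt \<in> {(m, t). partition_of 0 T m t}.
      ereal (\<Sum>i<fst mt. vnorm (d - 1) (\<lambda>k. X (snd mt (Suc i)) k - X (snd mt i) k)))"

definition tagged_partition :: "real \<Rightarrow> real \<Rightarrow> nat \<Rightarrow> (nat \<Rightarrow> real) \<Rightarrow> (nat \<Rightarrow> real) \<Rightarrow> bool" where
  "tagged_partition a b m t \<xi> \<longleftrightarrow> t 0 = a \<and> t m = b \<and>
     (\<forall>i<m. t i < t (Suc i) \<and> t i \<le> \<xi> i \<and> \<xi> i \<le> t (Suc i))"

definition rs_sum :: "(real \<Rightarrow> real) \<Rightarrow> (real \<Rightarrow> real) \<Rightarrow> nat \<Rightarrow> (nat \<Rightarrow> real) \<Rightarrow> (nat \<Rightarrow> real) \<Rightarrow> real" where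
  "rs_sum f g m t \<xi> = (\<Sum>i<m. f (\<xi> i) * (g (t (Suc i)) - g (t i)))"

definition has_rs_integral :: "(real \<Rightarrow> real) \<Rightarrow> (real \<Rightarrow> real) \<Rightarrow> real \<Rightarrow> real \<Rightarrow> real \<Rightarrow> bool" where
  "has_rs_integral f g a b L \<longleftrightarrow> (\<forall>\<epsilon>>0. \<exists>\<delta>>0. \<forall>m t \<xi>.
      tagged_partition a b m t \<xi> \<and> (\<forall>i<m. t (Suc i) - t i < \<delta>) \<longrightarrow> \<bar>rs_sum f g m t \<xi> - L\<bar> < \<epsilon>)"

definition rs_integral :: "(real \<Rightarrow> real) \<Rightarrow> (real \<Rightarrow> real) \<Rightarrow> real \<Rightarrow> real \<Rightarrow> real" where
  "rs_integral f g a b = (THE L. has_rs_integral f g a b L)"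

text \<open>Time augmentation: coordinates 0..d-2 are those of X, coordinate d-1 is time.
(Coordinates are 0-based: index i here corresponds to index i+1 in the paper.)\<close>
definition time_aug :: "nat \<Rightarrow> path \<Rightarrow> path" where
  "time_aug d X = (\<lambda>t i. if i < d - 1 then X t i else t)"

text \<open>Iterated integrals, with the multi-index given in reversed order:
sig_rev Y (i # J) t = integral from 0 to t of sig_rev Y J s dY^i(s).\<close>
fun sig_rev :: "path \<Rightarrow> nat list \<Rightarrow> real \<Rightarrow> real" where
  "sig_rev Y [] t = 1"
| "sig_rev Y (i # J) t = rs_integral (sig_rev Y J) (\<lambda>s. Y s i) 0 t"

text \<open>Signature term S^I over [0,T], I = (i_1,...,i_k):
 integral over 0<t_1<...<t_k<T of dY^{i_1}_{t_1} ... dY^{i_k}_{t_k}.\<close>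
definition sig_term :: "real \<Rightarrow> path \<Rightarrow> nat list \<Rightarrow> real" where
  "sig_term T Y I = sig_rev Y (rev I) T"

definition sd :: "nat \<Rightarrow> nat \<Rightarrow> nat" where
  "sd d p = (\<Sum>k\<le>p. d ^ k)"

text \<open>Index set of the extended truncated signature vector: multi-indices of length
at most p over {0..d-1} (signature coordinates), and 0..q-1 (coordinates of z).
It has s_d(p) + q elements.\<close>
definition idx :: "nat \<Rightarrow> nat \<Rightarrow> nat \<Rightarrow> (nat list + nat) set" where
  "idx d p q = Inl ` {I. length I \<le> p \<and> set I \<subseteq> {..<d}} \<union> Inr ` {..<q}"

text \<open>The coefficient space R^(s_d(p)+q), as functions supported on idx d p q.\<close>
definition coef_space :: "nat \<Rightarrow> nat \<Rightarrow> nat \<Rightarrow> (nat list + nat \<Rightarrow> real) set" where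
  "coef_space d p q = {\<theta>. \<forall>x. x \<notin> idx d p q \<longrightarrow> \<theta> x = 0}"

definition ball1 :: "nat \<Rightarrow> nat \<Rightarrow> nat \<Rightarrow> real \<Rightarrow> (nat list + nat \<Rightarrow> real) set" where
  "ball1 d p q r = {\<theta> \<in> coef_space d p q. (\<Sum>x\<in>idx d p q. \<bar>\<theta> x\<bar>) \<le> r}"

definition feature :: "nat \<Rightarrow> real \<Rightarrow> path \<Rightarrow> (nat \<Rightarrow> real) \<Rightarrow> nat list + nat \<Rightarrow> real" where
  "feature d T X z x = (case x of Inl I \<Rightarrow> sig_term T (time_aug d X) I | Inr j \<Rightarrow> z j)"

definition lin_pred :: "nat \<Rightarrow> real \<Rightarrow> nat \<Rightarrow> nat \<Rightarrow> (nat list + nat \<Rightarrow> real) \<Rightarrow> path \<Rightarrow> (nat \<Rightarrow> real) \<Rightarrow> real" where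
  "lin_pred d T p q \<theta> X z = (\<Sum>x\<in>idx d p q. \<theta> x * feature d T X z x)"

definition logloss :: "real \<Rightarrow> real \<Rightarrow> real" where
  "logloss y \<eta> = - y * \<eta> + ln (1 + exp \<eta>)"

definition sigmoid :: "real \<Rightarrow> real" where
  "sigmoid u = exp u / (1 + exp u)"

definition path_dom :: "nat \<Rightarrow> real \<Rightarrow> (nat \<Rightarrow> real) \<Rightarrow> path set" where
  "path_dom d T x0 = {X. (\<forall>i<d - 1. continuous_on {0..T} (\<lambda>t. X t i)) \<and>
      (\<forall>i<d - 1. X 0 i = x0 i) \<and> tv d T X < \<infinity>}"

definition cont_functional :: "nat \<Rightarrow> real \<Rightarrow> (nat \<Rightarrow> real) \<Rightarrow> (path \<Rightarrow> real) \<Rightarrow> bool" where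
  "cont_functional d T x0 G \<longleftrightarrow> (\<forall>X\<in>path_dom d T x0. \<forall>\<epsilon>>0. \<exists>\<delta>>0. \<forall>Y\<in>path_dom d T x0.
      tv d T (\<lambda>t i. Y t i - X t i) < ereal \<delta> \<longrightarrow> \<bar>G Y - G X\<bar> < \<epsilon>)"

definition vec_space :: "(nat \<Rightarrow> real) measure" where
  "vec_space = Pi\<^sub>M UNIV (\<lambda>_. borel)"

definition path_space :: "path measure" where
  "path_space = Pi\<^sub>M UNIV (\<lambda>_. vec_space)"

definition triple_space :: "((path \<times> (nat \<Rightarrow> real)) \<times> real) measure" where
  "triple_space = (path_space \<Otimes>\<^sub>M vec_space) \<Otimes>\<^sub>M borel"

definition risk :: "'w measure \<Rightarrow> ('w \<Rightarrow> path) \<Rightarrow> ('w \<Rightarrow> nat \<Rightarrow> real) \<Rightarrow> ('w \<Rightarrow> real)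
    \<Rightarrow> nat \<Rightarrow> real \<Rightarrow> nat \<Rightarrow> nat \<Rightarrow> (nat list + nat \<Rightarrow> real) \<Rightarrow> real" where
  "risk M X z y d T q p \<theta> = (\<integral>\<omega>. logloss (y \<omega>) (lin_pred d T p q \<theta> (X \<omega>) (z \<omega>)) \<partial>M)"

definition emp_risk :: "(nat \<Rightarrow> 'w \<Rightarrow> path) \<Rightarrow> (nat \<Rightarrow> 'w \<Rightarrow> nat \<Rightarrow> real) \<Rightarrow> (nat \<Rightarrow> 'w \<Rightarrow> real)
    \<Rightarrow> nat \<Rightarrow> real \<Rightarrow> nat \<Rightarrow> nat \<Rightarrow> nat \<Rightarrow> (nat list + nat \<Rightarrow> real) \<Rightarrow> 'w \<Rightarrow> real" where
  "emp_risk Xs zs ys d T q n p \<theta> \<omega> =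
     (1 / real n) * (\<Sum>i<n. logloss (ys i \<omega>) (lin_pred d T p q \<theta> (Xs i \<omega>) (zs i \<omega>)))"

definition emp_L :: "(nat \<Rightarrow> 'w \<Rightarrow> path) \<Rightarrow> (nat \<Rightarrow> 'w \<Rightarrow> nat \<Rightarrow> real) \<Rightarrow> (nat \<Rightarrow> 'w \<Rightarrow> real)
    \<Rightarrow> nat \<Rightarrow> real \<Rightarrow> nat \<Rightarrow> real \<Rightarrow> nat \<Rightarrow> nat \<Rightarrow> 'w \<Rightarrow> real" where
  "emp_L Xs zs ys d T q r n p \<omega> = (INF \<theta>\<in>ball1 d p q r. emp_risk Xs zs ys d T q n p \<theta> \<omega>)"

definition pen :: "real \<Rightarrow> real \<Rightarrow> nat \<Rightarrow> nat \<Rightarrow> nat \<Rightarrow> nat \<Rightarrow> real" where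
  "pen Cpen \<rho> d n p q = Cpen * sqrt (real (sd d p) * exp (real q)) / (real n powr \<rho>)"

definition p_hat :: "(nat \<Rightarrow> 'w \<Rightarrow> path) \<Rightarrow> (nat \<Rightarrow> 'w \<Rightarrow> nat \<Rightarrow> real) \<Rightarrow> (nat \<Rightarrow> 'w \<Rightarrow> real)
    \<Rightarrow> nat \<Rightarrow> real \<Rightarrow> nat \<Rightarrow> real \<Rightarrow> real \<Rightarrow> real \<Rightarrow> nat \<Rightarrow> 'w \<Rightarrow> nat" where
  "p_hat Xs zs ys d T q r Cpen \<rho> n \<omega> =
     (LEAST p. \<forall>p'. emp_L Xs zs ys d T q r n p \<omega> + pen Cpen \<rho> d n p q
                     \<le> emp_L Xs zs ys d T q r n p' \<omega> + pen Cpen \<rho> d n p' q)"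

end

(*
  Selecting an order p below the true order pstar requires the penalised empirical criterion at p
  to beat the one at pstar.  The empirical risk at pstar exceeds L pstar only through the sample
  mean of the loss at a fixed minimiser.  The empirical risk at p can fall below L p only if the
  sample mean of the loss at a population minimiser, or of one of its finitely many loss
  gradients, deviates from its expectation: by first-order optimality over the convex l1 ball, the
  linearisation at the minimiser is a lower bound.  All these variables are bounded, because the
  signature of the time-augmented path is dominated by exp (C_X + T) (iterated integrals against a
  control of mass C_X + T), so Hoeffding's inequality applies to each event, and a union bound over
  2 + 2 card (idx d p q) events gives the claim once n is so large that the penalty at pstar is
  below half of the gap L (pstar - 1) - L pstar.
*)
theory Submission
  imports Defs
begin

section \<open>Riemann--Stieltjes integrals against dominated integrators\<close>

lemma tagged_partition_mono:
  assumes "tagged_partition a b m t \<xi>" "i \<le> j" "j \<le> m"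
  shows "t i \<le> t j"
proof -
  have "{i..<j} \<subseteq> {..<m}" using assms(3) by auto
  then show ?thesis
    using lift_Suc_mono_le_ivl[of "{..<m}" t i j] assms(1,2)
    by (auto simp: tagged_partition_def less_imp_le)
qed

lemma tagged_partition_in_interval:
  assumes "tagged_partition a b m t \<xi>"
  shows "\<And>i. i \<le> m \<Longrightarrow> t i \<in> {a..b}" and "\<And>i. i < m \<Longrightarrow> \<xi> i \<in> {a..b}"
proof -
  have t: "t i \<in> {a..b}" if "i \<le> m" for i
    using tagged_partition_mono[OF assms, of 0 i] tagged_partition_mono[OF assms, of i m] assms that
    by (auto simp: tagged_partition_def)
  then show "\<And>i. i \<le> m \<Longrightarrow> t i \<in> {a..b}" .
  show "\<xi> i \<in> {a..b}" if "i < m" for i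
  proof -
    have "t i \<le> \<xi> i" "\<xi> i \<le> t (Suc i)" using assms that by (auto simp: tagged_partition_def)
    then show ?thesis using t[of i] t[of "Suc i"] that by auto
  qed
qed

lemma has_rs_integral_cong:
  assumes "\<And>s. s \<in> {a..b} \<Longrightarrow> f s = f' s" and "\<And>s. s \<in> {a..b} \<Longrightarrow> g s = g' s"
  shows "has_rs_integral f g a b I \<longleftrightarrow> has_rs_integral f' g' a b I"
proof -
  have "rs_sum f g m t \<xi> = rs_sum f' g' m t \<xi>" if "tagged_partition a b m t \<xi>" for m t \<xi>
    unfolding rs_sum_def
    using tagged_partition_in_interval[OF that] assms by (intro sum.cong) auto
  then have "(tagged_partition a b m t \<xi> \<and> P \<longrightarrow> \<bar>rs_sum f g m t \<xi> - I\<bar> < e) \<longleftrightarrow>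
      (tagged_partition a b m t \<xi> \<and> P \<longrightarrow> \<bar>rs_sum f' g' m t \<xi> - I\<bar> < e)" for m t \<xi> P e
    by auto
  then show ?thesis unfolding has_rs_integral_def by simp
qed

definition uniform_grid :: "real \<Rightarrow> real \<Rightarrow> nat \<Rightarrow> nat \<Rightarrow> real" where
  "uniform_grid a b N j = a + (b - a) * real j / real N"

lemma tagged_partition_uniform_grid:
  assumes "a < b" "0 < N"
  shows "tagged_partition a b N (uniform_grid a b N) (uniform_grid a b N)"
proof -
  have "(b - a) * real i / real N < (b - a) * real (Suc i) / real N" for i
    using assms by (intro divide_strict_right_mono mult_strict_left_mono) auto
  then show ?thesis using assms by (simp add: tagged_partition_def uniform_grid_def less_imp_le)
qed

lemma uniform_grid_step: "0 < N \<Longrightarrow> uniform_grid a b N (Suc j) - uniform_grid a b N j = (b - a) / N"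
  by (simp add: uniform_grid_def field_simps)

lemma uniform_grid_in_interval:
  assumes "a \<le> b" "j \<le> N"
  shows "uniform_grid a b N j \<in> {a..b}"
proof -
  have "0 \<le> real j / N" "real j / N \<le> 1" using assms(2) by (auto simp: divide_le_eq_1)
  then have "0 \<le> (b - a) * (real j / N)" "(b - a) * (real j / N) \<le> b - a"
    using assms(1) mult_left_le[of "real j / N" "b - a"] by auto
  then show ?thesis by (simp add: uniform_grid_def)
qed

lemma uniform_grid_Suc_mono: "a \<le> b \<Longrightarrow> uniform_grid a b N j \<le> uniform_grid a b N (Suc j)"
  by (simp add: uniform_grid_def divide_right_mono mult_left_mono)

lemma has_rs_integral_degenerate: "has_rs_integral f g a a I \<Longrightarrow> I = 0"
proof (rule ccontr)
  assume I: "has_rs_integral f g a a I" and "I \<noteq> 0"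
  then obtain \<delta> where "\<forall>m t \<xi>. tagged_partition a a m t \<xi> \<and> (\<forall>i<m. t (Suc i) - t i < \<delta>) \<longrightarrow>
      \<bar>rs_sum f g m t \<xi> - I\<bar> < \<bar>I\<bar>"
    unfolding has_rs_integral_def by (meson zero_less_abs_iff)
  moreover have "tagged_partition a a 0 (\<lambda>_. a) (\<lambda>_. a)" by (simp add: tagged_partition_def)
  ultimately have "\<bar>rs_sum f g 0 (\<lambda>_. a) (\<lambda>_. a) - I\<bar> < \<bar>I\<bar>" by blast
  then show False by (simp add: rs_sum_def)
qed

lemma has_rs_integral_uniform_sums:
  assumes I: "has_rs_integral f g a b I" and "a \<le> b"
  shows "(\<lambda>N. rs_sum f g N (uniform_grid a b N) (uniform_grid a b N)) \<longlonglongrightarrow> I"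
proof (cases "a = b")
  case True
  from I have "I = 0" unfolding True by (rule has_rs_integral_degenerate)
  then show ?thesis by (simp add: rs_sum_def uniform_grid_def True)
next
  case False
  with assms(2) have ab: "a < b" by simp
  show ?thesis
  proof (rule LIMSEQ_I)
    fix e :: real assume "0 < e"
    then obtain \<delta> where "0 < \<delta>" and \<delta>: "\<forall>m t \<xi>. tagged_partition a b m t \<xi> \<and>
        (\<forall>i<m. t (Suc i) - t i < \<delta>) \<longrightarrow> \<bar>rs_sum f g m t \<xi> - I\<bar> < e"
      using I unfolding has_rs_integral_def by blast
    obtain N0 :: nat where N0: "(b - a) / \<delta> < N0" using reals_Archimedean2 by blast
    have "norm (rs_sum f g N (uniform_grid a b N) (uniform_grid a b N) - I) < e" if "N0 \<le> N" for N
    proof -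
      have "0 < (b - a) / \<delta>" using ab \<open>0 < \<delta>\<close> by simp
      moreover have "(b - a) / \<delta> < N" using N0 that of_nat_le_iff[of N0 N] by linarith
      ultimately have "0 < real N" "b - a < N * \<delta>"
        using \<open>0 < \<delta>\<close> by (linarith, simp add: pos_divide_less_eq)
      then have "0 < N" by simp
      with \<open>b - a < N * \<delta>\<close> have "(b - a) / N < \<delta>" by (simp add: pos_divide_less_eq mult.commute)
      then show ?thesis
        using \<delta> tagged_partition_uniform_grid[OF ab \<open>0 < N\<close>] uniform_grid_step[OF \<open>0 < N\<close>] by simp
    qed
    then show "\<exists>N0. \<forall>N\<ge>N0. norm (rs_sum f g N (uniform_grid a b N) (uniform_grid a b N) - I) < e"
      by (intro exI[of _ N0] allI impI)
  qed
qed

lemma has_rs_integral_unique: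
  assumes "has_rs_integral f g a b I" "has_rs_integral f g a b J" "a \<le> b"
  shows "I = J"
  using LIMSEQ_unique[OF has_rs_integral_uniform_sums[OF assms(1,3)]
      has_rs_integral_uniform_sums[OF assms(2,3)]] .

lemma rs_integral_eqI:
  assumes "has_rs_integral f g a b I" "a \<le> b"
  shows "rs_integral f g a b = I"
  unfolding rs_integral_def
proof (rule the_equality)
  show "has_rs_integral f g a b J \<Longrightarrow> J = I" for J
    using has_rs_integral_unique[OF _ assms(1,2)] .
qed (rule assms(1))

definition right_lim :: "(real \<Rightarrow> real) \<Rightarrow> real \<Rightarrow> real" where
  "right_lim G t = Inf (G ` {t<..})"

context
  fixes G :: "real \<Rightarrow> real"
  assumes G_mono: "mono G"
begin

lemma mono_bdd_below_greaterThan: "bdd_below (G ` {t<..})"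
  by (rule bdd_belowI2[of _ "G t"]) (auto intro: monoD[OF G_mono])

lemma le_right_lim: "G t \<le> right_lim G t"
  unfolding right_lim_def by (rule cInf_greatest) (auto intro: monoD[OF G_mono])

lemma right_lim_le: "t < s \<Longrightarrow> right_lim G t \<le> G s"
  unfolding right_lim_def by (intro cInf_lower mono_bdd_below_greaterThan) auto

lemma mono_right_lim: "mono (right_lim G)"
proof (rule monoI)
  fix x y :: real assume "x \<le> y"
  show "right_lim G x \<le> right_lim G y"
    unfolding right_lim_def[of G y] by (rule cInf_greatest) (use \<open>x \<le> y\<close> right_lim_le in auto)
qed

lemma continuous_at_right_right_lim: "continuous (at_right a) (right_lim G)"
proof -
  have "\<exists>\<delta>>0. right_lim G (a + \<delta>) - right_lim G a < e" if "0 < e" for e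
  proof -
    have "Inf (G ` {a<..}) < right_lim G a + e" using that by (simp add: right_lim_def)
    then obtain s where s: "a < s" "G s < right_lim G a + e"
      by (subst (asm) cInf_less_iff) (auto simp: mono_bdd_below_greaterThan)
    moreover have "a + (s - a) / 2 < s" using s(1) by (simp add: field_simps)
    ultimately show ?thesis
      using right_lim_le[of "a + (s - a) / 2" s] by (intro exI[of _ "(s - a) / 2"]) auto
  qed
  then show ?thesis
    using continuous_at_right_real_increasing[of "right_lim G" a] mono_right_lim by (auto simp: mono_def)
qed

end

text \<open>The decomposition lets Riemann--Stieltjes sums against a continuous dominated integrator be
  compared with Lebesgue--Stieltjes integrals.\<close>

lemma continuous_dominated_eq_diff_mono:
  fixes g G :: "real \<Rightarrow> real"
  assumes g: "continuous_on UNIV g" and dom: "\<And>x y. x \<le> y \<Longrightarrow> \<bar>g y - g x\<bar> \<le> G y - G x"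
  obtains F1 F2 where "mono F1" "mono F2"
    "\<And>a. continuous (at_right a) F1" "\<And>a. continuous (at_right a) F2" "\<And>t. g t = F1 t - F2 t"
proof -
  have G: "mono G" unfolding mono_def using dom by fastforce
  have dom_lim: "\<bar>g y - g x\<bar> \<le> right_lim G y - right_lim G x" if "x < y" for x y
  proof -
    have "isCont g x" using g by (simp add: continuous_on_eq_continuous_at)
    then have "((\<lambda>u. \<bar>g y - g u\<bar>) \<longlongrightarrow> \<bar>g y - g x\<bar>) (at_right x)"
      by (intro tendsto_intros) (simp add: filterlim_at_split isCont_def)
    moreover have "eventually (\<lambda>u. u < y) (at_right x)"
      using \<open>x < y\<close> eventually_at_right_field by blast
    then have "eventually (\<lambda>u. \<bar>g y - g u\<bar> \<le> right_lim G y - right_lim G x) (at_right x)"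
      using eventually_at_right_less[of x]
    proof eventually_elim
      case (elim u)
      then have "\<bar>g y - g u\<bar> \<le> G y - G u" using dom by simp
      also have "\<dots> \<le> right_lim G y - right_lim G x"
        using le_right_lim[OF G, of y] right_lim_le[OF G, of x u] elim by simp
      finally show ?case .
    qed
    ultimately show ?thesis by (rule tendsto_upperbound) simp
  qed
  have "mono (\<lambda>t. right_lim G t - g t)"
    unfolding mono_def using dom_lim by (fastforce simp: order_le_less)
  moreover have "continuous (at_right a) (\<lambda>t. right_lim G t - g t)" for a
    using continuous_at_right_right_lim[OF G] g
    by (intro continuous_intros)
      (simp_all add: continuous_on_eq_continuous_at continuous_at_imp_continuous_at_within)
  ultimately show ?thesis
    using that[of "right_lim G" "\<lambda>t. right_lim G t - g t"] mono_right_lim[OF G]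
      continuous_at_right_right_lim[OF G] by simp
qed

definition ls_integral :: "(real \<Rightarrow> real) \<Rightarrow> (real \<Rightarrow> real) \<Rightarrow> real \<Rightarrow> real \<Rightarrow> real" where
  "ls_integral h F a b = (LINT s:{a<..b}|interval_measure F. h s)"

context
  fixes F :: "real \<Rightarrow> real"
  assumes F_mono: "mono F" and F_rc: "\<And>a. continuous (at_right a) F"
begin

lemma measure_Ioc_interval_measure: "a \<le> b \<Longrightarrow> measure (interval_measure F) {a<..b} = F b - F a"
  using measure_interval_measure_Ioc F_mono F_rc by (auto simp: mono_def)

lemma set_integrable_interval_measure_Ioc:
  fixes h :: "real \<Rightarrow> real"
  assumes h: "h \<in> borel_measurable borel" and K: "\<And>s. \<bar>h s\<bar> \<le> K"
  shows "set_integrable (interval_measure F) {a<..b} h"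
proof -
  have "emeasure (interval_measure F) {a<..b} < \<infinity>"
    using emeasure_interval_measure_Ioc_eq[of F a b] F_mono F_rc by (auto simp: mono_def)
  then show ?thesis
    unfolding set_integrable_def using h K
    by (intro integrableI_bounded_set[where A = "{a<..b}" and B = K])
       (auto simp: measurable_cong_sets[OF sets_interval_measure refl] split: split_indicator)
qed

lemma ls_integral_split:
  fixes h :: "real \<Rightarrow> real"
  assumes "h \<in> borel_measurable borel" "\<And>s. \<bar>h s\<bar> \<le> K" "a \<le> b" "b \<le> c"
  shows "ls_integral h F a c = ls_integral h F a b + ls_integral h F b c"
proof -
  have "{a<..c} = {a<..b} \<union> {b<..c}" using assms(3,4) by auto
  then show ?thesis
    unfolding ls_integral_def
    using set_integral_Un[of "{a<..b}" "{b<..c}" "interval_measure F" h]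
      set_integrable_interval_measure_Ioc[OF assms(1,2)] by auto
qed

lemma ls_integral_approx:
  fixes h :: "real \<Rightarrow> real"
  assumes h: "h \<in> borel_measurable borel" "\<And>s. \<bar>h s\<bar> \<le> K" and "a \<le> b"
    and osc: "\<And>s. s \<in> {a<..b} \<Longrightarrow> \<bar>c - h s\<bar> \<le> e"
  shows "\<bar>c * (F b - F a) - ls_integral h F a b\<bar> \<le> e * (F b - F a)"
proof -
  let ?\<mu> = "interval_measure F"
  have fin: "emeasure ?\<mu> {a<..b} \<noteq> \<infinity>"
    using emeasure_interval_measure_Ioc_eq[of F a b] F_mono F_rc by (auto simp: mono_def)
  have int: "set_integrable ?\<mu> {a<..b} (\<lambda>s. c - h s)"
    using h by (intro set_integrable_interval_measure_Ioc[where K = "\<bar>c\<bar> + K"])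
      (auto intro: order_trans[OF abs_triangle_ineq4] add_left_mono)
  have "c * (F b - F a) - ls_integral h F a b = (LINT s:{a<..b}|?\<mu>. c - h s)"
    unfolding ls_integral_def measure_Ioc_interval_measure[OF \<open>a \<le> b\<close>, symmetric]
    using set_integral_const[of "{a<..b}" ?\<mu> c] fin set_integral_diff(2)[of ?\<mu> "{a<..b}" "\<lambda>_. c" h]
      set_integrable_interval_measure_Ioc[OF h] set_integrable_interval_measure_Ioc[of "\<lambda>_. c" "\<bar>c\<bar>"]
    by (simp add: mult.commute)
  also have "\<bar>\<dots>\<bar> \<le> (LINT s:{a<..b}|?\<mu>. \<bar>c - h s\<bar>)"
    using set_integral_norm_bound[OF int] by simp
  also have "\<dots> \<le> (LINT s:{a<..b}|?\<mu>. e)"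
    using int osc set_integrable_interval_measure_Ioc[of "\<lambda>_. e" "\<bar>e\<bar>"]
    by (intro set_integral_mono) (auto simp: set_integrable_abs)
  also have "\<dots> = e * (F b - F a)"
    using set_integral_const[of "{a<..b}" ?\<mu> e] fin measure_Ioc_interval_measure[OF \<open>a \<le> b\<close>]
    by (simp add: mult.commute)
  finally show ?thesis .
qed

end

lemma rs_sum_ls_integral_approx:
  fixes F1 F2 h :: "real \<Rightarrow> real"
  assumes F: "mono F1" "mono F2" "\<And>a. continuous (at_right a) F1" "\<And>a. continuous (at_right a) F2"
    and h: "h \<in> borel_measurable borel" "\<And>s. \<bar>h s\<bar> \<le> K"
    and t: "\<forall>i<m. t i \<le> t (Suc i)"
    and osc: "\<And>i s. i < m \<Longrightarrow> s \<in> {t i<..t (Suc i)} \<Longrightarrow> \<bar>h (\<xi> i) - h s\<bar> \<le> e"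
  shows "\<bar>rs_sum h (\<lambda>s. F1 s - F2 s) m t \<xi> -
            (ls_integral h F1 (t 0) (t m) - ls_integral h F2 (t 0) (t m))\<bar>
         \<le> e * ((F1 (t m) - F1 (t 0)) + (F2 (t m) - F2 (t 0)))"
  using t osc
proof (induction m)
  case 0
  then show ?case by (simp add: rs_sum_def ls_integral_def set_lebesgue_integral_def)
next
  case (Suc m)
  let ?a = "t m" and ?b = "t (Suc m)"
  have ab: "?a \<le> ?b" using Suc.prems(1) by simp
  have "{0..<m} \<subseteq> {..<Suc m}" by auto
  then have t0: "t 0 \<le> ?a" using Suc.prems(1) lift_Suc_mono_le_ivl[of "{..<Suc m}" t 0 m] by simp
  have osc: "\<And>s. s \<in> {?a<..?b} \<Longrightarrow> \<bar>h (\<xi> m) - h s\<bar> \<le> e"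
    using Suc.prems(2) by auto
  have "\<bar>h (\<xi> m) * ((F1 ?b - F2 ?b) - (F1 ?a - F2 ?a)) -
           (ls_integral h F1 ?a ?b - ls_integral h F2 ?a ?b)\<bar>
        \<le> e * ((F1 ?b - F1 ?a) + (F2 ?b - F2 ?a))"
    using ls_integral_approx[OF F(1,3) h ab osc] ls_integral_approx[OF F(2,4) h ab osc]
    by (simp add: algebra_simps)
  moreover have "ls_integral h F1 (t 0) ?b = ls_integral h F1 (t 0) ?a + ls_integral h F1 ?a ?b"
    "ls_integral h F2 (t 0) ?b = ls_integral h F2 (t 0) ?a + ls_integral h F2 ?a ?b"
    using ls_integral_split[OF F(1,3) h t0 ab] ls_integral_split[OF F(2,4) h t0 ab] by simp_all
  ultimately show ?case
    using Suc by (simp add: rs_sum_def algebra_simps)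
qed

lemma has_rs_integral_ls_integral:
  fixes F1 F2 h :: "real \<Rightarrow> real"
  assumes F: "mono F1" "mono F2" "\<And>a. continuous (at_right a) F1" "\<And>a. continuous (at_right a) F2"
    and h: "continuous_on UNIV h" "\<And>s. \<bar>h s\<bar> \<le> K" and "a \<le> b"
  shows "has_rs_integral h (\<lambda>s. F1 s - F2 s) a b (ls_integral h F1 a b - ls_integral h F2 a b)"
  unfolding has_rs_integral_def
proof (intro allI impI)
  fix \<epsilon> :: real assume "0 < \<epsilon>"
  define V where "V = (F1 b - F1 a) + (F2 b - F2 a)"
  have "0 \<le> V" using F(1,2) \<open>a \<le> b\<close> by (simp add: V_def mono_def add_nonneg_nonneg)
  define e where "e = \<epsilon> / (V + 1)"
  have "0 < e" "e * V < \<epsilon>"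
    using \<open>0 < \<epsilon>\<close> \<open>0 \<le> V\<close> by (simp_all add: e_def field_simps)
  have "uniformly_continuous_on {a..b} h"
    by (rule compact_uniformly_continuous) (auto intro: continuous_on_subset[OF h(1)])
  then obtain \<delta> where "0 < \<delta>" and \<delta>: "\<And>x x'. x \<in> {a..b} \<Longrightarrow> x' \<in> {a..b} \<Longrightarrow> dist x' x < \<delta> \<Longrightarrow>
      dist (h x') (h x) < e"
    using \<open>0 < e\<close> unfolding uniformly_continuous_on_def by metis
  have "\<bar>rs_sum h (\<lambda>s. F1 s - F2 s) m t \<xi> - (ls_integral h F1 a b - ls_integral h F2 a b)\<bar> < \<epsilon>"
    if tp: "tagged_partition a b m t \<xi>" and mesh: "\<forall>i<m. t (Suc i) - t i < \<delta>" for m t \<xi>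
  proof -
    have osc: "\<bar>h (\<xi> i) - h s\<bar> \<le> e" if "i < m" "s \<in> {t i<..t (Suc i)}" for i s
    proof -
      have "s \<in> {a..b}"
        using that tagged_partition_in_interval(1)[OF tp, of i]
          tagged_partition_in_interval(1)[OF tp, of "Suc i"] by auto
      moreover have "dist s (\<xi> i) < \<delta>"
        using tp mesh that by (force simp: tagged_partition_def dist_real_def)
      ultimately show ?thesis
        using \<delta>[of "\<xi> i" s] tagged_partition_in_interval(2)[OF tp that(1)]
        by (simp add: dist_real_def abs_minus_commute)
    qed
    have "\<forall>i<m. t i \<le> t (Suc i)" using tp by (auto simp: tagged_partition_def less_imp_le)
    from rs_sum_ls_integral_approx[OF F borel_measurable_continuous_onI[OF h(1)] h(2) this osc]
    have "\<bar>rs_sum h (\<lambda>s. F1 s - F2 s) m t \<xi> - (ls_integral h F1 a b - ls_integral h F2 a b)\<bar> \<le> e * V"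
      using tp by (simp add: tagged_partition_def V_def)
    then show ?thesis using \<open>e * V < \<epsilon>\<close> by linarith
  qed
  then show "\<exists>\<delta>>0. \<forall>m t \<xi>. tagged_partition a b m t \<xi> \<and> (\<forall>i<m. t (Suc i) - t i < \<delta>) \<longrightarrow>
      \<bar>rs_sum h (\<lambda>s. F1 s - F2 s) m t \<xi> - (ls_integral h F1 a b - ls_integral h F2 a b)\<bar> < \<epsilon>"
    using \<open>0 < \<delta>\<close> by blast
qed

lemma ls_integral_diff_increment_le:
  fixes F1 F2 h :: "real \<Rightarrow> real"
  assumes F: "mono F1" "mono F2" "\<And>a. continuous (at_right a) F1" "\<And>a. continuous (at_right a) F2"
    and h: "h \<in> borel_measurable borel" "\<And>s. \<bar>h s\<bar> \<le> K"
    and "a \<le> x" "x \<le> y" "y \<le> b" "0 \<le> e" and osc: "\<And>s. s \<in> {x<..y} \<Longrightarrow> \<bar>h x - h s\<bar> \<le> e"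
  shows "\<bar>(ls_integral h F1 a y - ls_integral h F2 a y) - (ls_integral h F1 a x - ls_integral h F2 a x)\<bar>
           \<le> K * \<bar>(F1 y - F2 y) - (F1 x - F2 x)\<bar> + e * ((F1 b - F1 a) + (F2 b - F2 a))"
proof -
  have "(ls_integral h F1 a y - ls_integral h F2 a y) - (ls_integral h F1 a x - ls_integral h F2 a x)
      = ls_integral h F1 x y - ls_integral h F2 x y"
    using ls_integral_split[OF F(1,3) h, of a x y] ls_integral_split[OF F(2,4) h, of a x y]
      \<open>a \<le> x\<close> \<open>x \<le> y\<close> by simp
  moreover have "\<bar>h x * ((F1 y - F2 y) - (F1 x - F2 x)) - (ls_integral h F1 x y - ls_integral h F2 x y)\<bar>
      \<le> e * ((F1 y - F1 x) + (F2 y - F2 x))"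
    using ls_integral_approx[OF F(1,3) h \<open>x \<le> y\<close> osc] ls_integral_approx[OF F(2,4) h \<open>x \<le> y\<close> osc]
    by (simp add: algebra_simps)
  moreover have "F1 y - F1 x \<le> F1 b - F1 a" "F2 y - F2 x \<le> F2 b - F2 a"
    using monoD[OF F(1), of y b] monoD[OF F(1), of a x] monoD[OF F(2), of y b] monoD[OF F(2), of a x]
      \<open>a \<le> x\<close> \<open>y \<le> b\<close> by simp_all
  then have "e * ((F1 y - F1 x) + (F2 y - F2 x)) \<le> e * ((F1 b - F1 a) + (F2 b - F2 a))"
    using \<open>0 \<le> e\<close> by (intro mult_left_mono) simp_all
  moreover have "\<bar>h x * ((F1 y - F2 y) - (F1 x - F2 x))\<bar> \<le> K * \<bar>(F1 y - F2 y) - (F1 x - F2 x)\<bar>"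
    unfolding abs_mult using h(2)[of x] by (intro mult_right_mono) auto
  ultimately show ?thesis by linarith
qed

lemma ls_integral_diff_continuous_on:
  fixes F1 F2 h :: "real \<Rightarrow> real"
  assumes F: "mono F1" "mono F2" "\<And>a. continuous (at_right a) F1" "\<And>a. continuous (at_right a) F2"
    and h: "continuous_on UNIV h" "\<And>s. \<bar>h s\<bar> \<le> K"
    and g: "continuous_on UNIV (\<lambda>s. F1 s - F2 s)"
  shows "continuous_on {a..b} (\<lambda>t. ls_integral h F1 a t - ls_integral h F2 a t)"
  unfolding continuous_on_iff
proof (intro ballI allI impI)
  fix x \<epsilon> :: real assume x: "x \<in> {a..b}" and "0 < \<epsilon>"
  define \<Phi> where "\<Phi> t = ls_integral h F1 a t - ls_integral h F2 a t" for t
  define V where "V = (F1 b - F1 a) + (F2 b - F2 a)"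
  have "0 \<le> K" using h(2)[of 0] by linarith
  have "0 \<le> V" using F(1,2) x by (simp add: V_def mono_def add_nonneg_nonneg)
  define e where "e = \<epsilon> / (2 * (V + 1))"
  have "0 < e" "e * V < \<epsilon> / 2"
    using \<open>0 < \<epsilon>\<close> \<open>0 \<le> V\<close> by (simp_all add: e_def field_simps)
  have "uniformly_continuous_on {a..b} h"
    by (rule compact_uniformly_continuous) (auto intro: continuous_on_subset[OF h(1)])
  then obtain \<delta>1 where "0 < \<delta>1"
    and \<delta>1: "\<forall>u\<in>{a..b}. \<forall>u'\<in>{a..b}. dist u' u < \<delta>1 \<longrightarrow> dist (h u') (h u) < e"
    using \<open>0 < e\<close> unfolding uniformly_continuous_on_def by metis
  have "0 < \<epsilon> / (2 * (K + 1))" using \<open>0 < \<epsilon>\<close> \<open>0 \<le> K\<close> by simp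
  then obtain \<delta>2 where "0 < \<delta>2" and \<delta>2: "\<And>x'. dist x' x < \<delta>2 \<Longrightarrow>
      dist (F1 x' - F2 x') (F1 x - F2 x) < \<epsilon> / (2 * (K + 1))"
    using g unfolding continuous_on_iff by (metis UNIV_I)
  have osc: "\<bar>h u - h s\<bar> \<le> e" if "u \<in> {a..b}" "s \<in> {a..b}" "dist s u < \<delta>1" for u s
    using \<delta>1 that by (force simp: dist_real_def)
  have "dist (\<Phi> x') (\<Phi> x) < \<epsilon>" if x': "x' \<in> {a..b}" and d: "dist x' x < min \<delta>1 \<delta>2" for x'
  proof -
    note increment = ls_integral_diff_increment_le[OF F borel_measurable_continuous_onI[OF h(1)] h(2)]
    have "\<bar>\<Phi> x' - \<Phi> x\<bar> \<le> K * \<bar>(F1 x' - F2 x') - (F1 x - F2 x)\<bar> + e * V"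
    proof (cases "x \<le> x'")
      case True
      then show ?thesis
        using increment[of a x x' b e] x x' d \<open>0 < e\<close> osc[of x] by (auto simp: \<Phi>_def V_def dist_real_def)
    next
      case False
      then have "\<bar>\<Phi> x - \<Phi> x'\<bar> \<le> K * \<bar>(F1 x - F2 x) - (F1 x' - F2 x')\<bar> + e * V"
        using increment[of a x' x b e] x x' d \<open>0 < e\<close> osc[of x'] by (auto simp: \<Phi>_def V_def dist_real_def)
      then show ?thesis by (simp add: abs_minus_commute)
    qed
    also have "K * \<bar>(F1 x' - F2 x') - (F1 x - F2 x)\<bar> \<le> K * (\<epsilon> / (2 * (K + 1)))"
      using \<delta>2[of x'] d \<open>0 \<le> K\<close> by (intro mult_left_mono) (auto simp: dist_real_def)
    also have "K * (\<epsilon> / (2 * (K + 1))) \<le> \<epsilon> / 2"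
      using \<open>0 \<le> K\<close> \<open>0 < \<epsilon>\<close> by (simp add: field_simps)
    finally show ?thesis using \<open>e * V < \<epsilon> / 2\<close> by (simp add: dist_real_def)
  qed
  then show "\<exists>\<delta>>0. \<forall>x'\<in>{a..b}. dist x' x < \<delta> \<longrightarrow>
      dist (ls_integral h F1 a x' - ls_integral h F2 a x') (ls_integral h F1 a x - ls_integral h F2 a x) < \<epsilon>"
    using \<open>0 < \<delta>1\<close> \<open>0 < \<delta>2\<close> unfolding \<Phi>_def by (intro exI[of _ "min \<delta>1 \<delta>2"]) auto
qed

lemma clamp_real: "a \<le> b \<Longrightarrow> clamp a b (x::real) = max a (min x b)"
  by (simp add: clamp_def Basis_real_def max_def min_def)

lemma has_rs_integral_exists_continuous:
  fixes f g G :: "real \<Rightarrow> real"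
  assumes T: "0 \<le> T" and f: "continuous_on {0..T} f" and g: "continuous_on {0..T} g"
    and dom: "\<And>a b. 0 \<le> a \<Longrightarrow> a \<le> b \<Longrightarrow> b \<le> T \<Longrightarrow> \<bar>g b - g a\<bar> \<le> G b - G a"
  obtains I where "\<And>t. t \<in> {0..T} \<Longrightarrow> has_rs_integral f g 0 t (I t)" and "continuous_on {0..T} I"
proof -
  let ?c = "clamp 0 T"
  have c: "?c s \<in> {0..T}" "s \<in> {0..T} \<Longrightarrow> ?c s = s" "x \<le> y \<Longrightarrow> ?c x \<le> ?c y" for s x y :: real
    using T by (auto simp: clamp_real)
  define fc where "fc s = f (?c s)" for s
  define gc where "gc s = g (?c s)" for s
  have fc: "continuous_on UNIV fc" and gc: "continuous_on UNIV gc"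
    unfolding fc_def gc_def using f g by (auto intro!: clamp_continuous_on)
  have dom_c: "\<bar>gc y - gc x\<bar> \<le> G (?c y) - G (?c x)" if "x \<le> y" for x y
    unfolding gc_def using dom c that by auto
  obtain F1 F2 where F: "mono F1" "mono F2" "\<And>a. continuous (at_right a) F1"
      "\<And>a. continuous (at_right a) F2" and gc_eq: "\<And>t. gc t = F1 t - F2 t"
    using continuous_dominated_eq_diff_mono[OF gc dom_c] by blast
  obtain K where K: "\<And>s. \<bar>fc s\<bar> \<le> K"
  proof -
    have "bounded (f ` {0..T})" by (intro compact_imp_bounded compact_continuous_image f) simp
    then obtain K where "\<forall>u\<in>f ` {0..T}. norm u \<le> K" by (auto simp: bounded_iff)
    then show ?thesis using that[of K] c(1) by (auto simp: fc_def)
  qed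
  have g_eq: "(\<lambda>s. F1 s - F2 s) = gc" using gc_eq by (simp add: fun_eq_iff)
  show ?thesis
  proof
    fix t assume t: "t \<in> {0..T}"
    have "has_rs_integral fc (\<lambda>s. F1 s - F2 s) 0 t (ls_integral fc F1 0 t - ls_integral fc F2 0 t)"
      using t by (intro has_rs_integral_ls_integral[OF F fc K]) simp
    then show "has_rs_integral f g 0 t (ls_integral fc F1 0 t - ls_integral fc F2 0 t)"
      unfolding g_eq using t c(2)
      by (subst (asm) has_rs_integral_cong[of 0 t _ f _ g]) (auto simp: fc_def gc_def)
  next
    show "continuous_on {0..T} (\<lambda>t. ls_integral fc F1 0 t - ls_integral fc F2 0 t)"
      using gc unfolding g_eq[symmetric] by (rule ls_integral_diff_continuous_on[OF F fc K])
  qed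
qed

section \<open>Signatures of bounded-variation paths\<close>

lemma vnorm_nonneg: "0 \<le> vnorm k v"
  by (simp add: vnorm_def sum_nonneg)

lemma abs_le_vnorm: "i < k \<Longrightarrow> \<bar>v i\<bar> \<le> vnorm k v"
  unfolding vnorm_def by (rule real_le_rsqrt) (auto intro: member_le_sum)

lemma partition_sum_add_increment_le_tv:
  assumes "partition_of 0 a m t" "a \<le> b"
  shows "ereal ((\<Sum>i<m. vnorm (d - 1) (\<lambda>k. Y (t (Suc i)) k - Y (t i) k))
                + vnorm (d - 1) (\<lambda>k. Y b k - Y a k)) \<le> tv d b Y"
proof -
  define t' where "t' = t(Suc m := b)"
  have "partition_of 0 b (Suc m) t'"
    using assms unfolding partition_of_def t'_def by (auto simp: less_Suc_eq)
  then have "ereal (\<Sum>i<Suc m. vnorm (d - 1) (\<lambda>k. Y (t' (Suc i)) k - Y (t' i) k)) \<le> tv d b Y"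
    unfolding tv_def by (intro SUP_upper2[where i = "(Suc m, t')"]) auto
  moreover have "(\<Sum>i<m. vnorm (d - 1) (\<lambda>k. Y (t' (Suc i)) k - Y (t' i) k))
      = (\<Sum>i<m. vnorm (d - 1) (\<lambda>k. Y (t (Suc i)) k - Y (t i) k))"
    by (intro sum.cong) (auto simp: t'_def)
  ultimately show ?thesis
    using assms(1) by (simp add: t'_def partition_of_def)
qed

lemma tv_nonneg:
  assumes "0 \<le> t"
  shows "0 \<le> tv d t Y"
proof -
  have "partition_of 0 t 1 (\<lambda>i. if i = 0 then 0 else t)"
    using assms by (simp add: partition_of_def)
  then have "ereal (vnorm (d - 1) (\<lambda>k. Y t k - Y 0 k)) \<le> tv d t Y"
    unfolding tv_def by (intro SUP_upper2[where i = "(1, \<lambda>i. if i = 0 then 0 else t)"]) auto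
  then show ?thesis using vnorm_nonneg[of "d - 1" "\<lambda>k. Y t k - Y 0 k"]
    by (metis ereal_less_eq(5) order_trans)
qed

lemma tv_mono:
  assumes "a \<le> b"
  shows "tv d a Y \<le> tv d b Y"
  unfolding tv_def[of d a]
proof (rule SUP_least, safe)
  fix m t assume "partition_of 0 a m t"
  from partition_sum_add_increment_le_tv[OF this assms, of d Y] vnorm_nonneg
  show "ereal (\<Sum>i<fst (m, t). vnorm (d - 1) (\<lambda>k. Y (snd (m, t) (Suc i)) k - Y (snd (m, t) i) k))
      \<le> tv d b Y"
    by (auto elim!: order_trans[rotated])
qed

lemma tv_add_increment_le:
  assumes "0 \<le> a" "a \<le> b" and fin: "tv d b Y < \<infinity>"
  shows "real_of_ereal (tv d a Y) + vnorm (d - 1) (\<lambda>k. Y b k - Y a k) \<le> real_of_ereal (tv d b Y)"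
proof -
  have b: "tv d b Y = ereal (real_of_ereal (tv d b Y))"
    using fin tv_nonneg[of b d Y] assms by (cases "tv d b Y") auto
  let ?v = "vnorm (d - 1) (\<lambda>k. Y b k - Y a k)"
  have "tv d a Y \<le> ereal (real_of_ereal (tv d b Y) - ?v)"
    unfolding tv_def[of d a]
  proof (rule SUP_least, safe)
    fix m t assume "partition_of 0 a m t"
    from partition_sum_add_increment_le_tv[OF this assms(2), of d Y]
    show "ereal (\<Sum>i<fst (m, t). vnorm (d - 1) (\<lambda>k. Y (snd (m, t) (Suc i)) k - Y (snd (m, t) i) k))
        \<le> ereal (real_of_ereal (tv d b Y) - ?v)"
      by (subst (asm) b) simp
  qed
  then show ?thesis
    using tv_nonneg[OF assms(1), of d Y] by (cases "tv d a Y") auto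
qed

lemma pow_div_fact_mult_diff_le:
  fixes x y :: real
  assumes "0 \<le> x" "x \<le> y"
  shows "x ^ k / fact k * (y - x) \<le> (y ^ Suc k - x ^ Suc k) / fact (Suc k)"
proof -
  have "real (Suc k) * x ^ k = (\<Sum>p<Suc k. x ^ p * x ^ (k - p))"
    by (simp add: power_add[symmetric])
  also have "\<dots> \<le> (\<Sum>p<Suc k. y ^ p * x ^ (k - p))"
    using assms by (intro sum_mono mult_right_mono power_mono) auto
  finally have "(y - x) * (real (Suc k) * x ^ k) \<le> (y - x) * (\<Sum>p<Suc k. y ^ p * x ^ (k - p))"
    using assms by (intro mult_left_mono) auto
  then have A: "real (Suc k) * x ^ k * (y - x) \<le> y ^ Suc k - x ^ Suc k"
    using diff_power_eq_sum[of y k x] by (simp add: mult.commute)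
  have "x ^ k / fact k * (y - x) = (real (Suc k) * (x ^ k * (y - x))) / (real (Suc k) * fact k)"
    by (subst mult_divide_mult_cancel_left) auto
  also have "\<dots> = real (Suc k) * x ^ k * (y - x) / fact (Suc k)"
    by (simp add: fact_Suc mult.assoc)
  also have "\<dots> \<le> (y ^ Suc k - x ^ Suc k) / fact (Suc k)"
    using A by (intro divide_right_mono) auto
  finally show ?thesis .
qed

lemma pow_div_fact_le_exp:
  fixes x :: real
  assumes "0 \<le> x"
  shows "x ^ k / fact k \<le> exp x"
proof -
  have "(\<lambda>n. x ^ n /\<^sub>R fact n) sums exp x" by (rule exp_converges)
  then have "(\<Sum>n\<in>{k}. x ^ n /\<^sub>R fact n) \<le> exp x"
    using assms by (intro sum_le_suminf[where f = "\<lambda>n. x ^ n /\<^sub>R fact n", THEN order_trans])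
      (auto simp: sums_iff)
  then show ?thesis by (simp add: divide_inverse_commute)
qed

lemma rs_sum_left_power_bound:
  fixes f g G :: "real \<Rightarrow> real" and x :: "nat \<Rightarrow> real"
  assumes G: "\<And>j. j < m \<Longrightarrow> 0 \<le> G (x j)" "\<And>j. j < m \<Longrightarrow> G (x j) \<le> G (x (Suc j))"
    and f: "\<And>j. j < m \<Longrightarrow> \<bar>f (x j)\<bar> \<le> G (x j) ^ k / fact k"
    and g: "\<And>j. j < m \<Longrightarrow> \<bar>g (x (Suc j)) - g (x j)\<bar> \<le> G (x (Suc j)) - G (x j)"
  shows "\<bar>rs_sum f g m x x\<bar> \<le> (G (x m) ^ Suc k - G (x 0) ^ Suc k) / fact (Suc k)"
proof -
  have "\<bar>f (x j) * (g (x (Suc j)) - g (x j))\<bar> \<le> G (x j) ^ k / fact k * (G (x (Suc j)) - G (x j))"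
    if "j < m" for j
    unfolding abs_mult using f[OF that] g[OF that] G[OF that] by (intro mult_mono) auto
  then have "\<bar>rs_sum f g m x x\<bar> \<le> (\<Sum>j<m. G (x j) ^ k / fact k * (G (x (Suc j)) - G (x j)))"
    unfolding rs_sum_def by (intro order_trans[OF sum_abs] sum_mono) auto
  also have "\<dots> \<le> (\<Sum>j<m. (G (x (Suc j)) ^ Suc k - G (x j) ^ Suc k) / fact (Suc k))"
    using G by (intro sum_mono pow_div_fact_mult_diff_le) auto
  also have "\<dots> = (G (x m) ^ Suc k - G (x 0) ^ Suc k) / fact (Suc k)"
    using sum_lessThan_telescope[of "\<lambda>j. G (x j) ^ Suc k" m]
    by (simp add: sum_divide_distrib[symmetric] del: power_Suc)
  finally show ?thesis .
qed

lemma has_rs_integral_power_bound: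
  fixes f g G :: "real \<Rightarrow> real"
  assumes I: "has_rs_integral f g 0 t I" and "0 \<le> t" and G0: "0 \<le> G 0"
    and G: "\<And>a b. 0 \<le> a \<Longrightarrow> a \<le> b \<Longrightarrow> b \<le> t \<Longrightarrow> G a \<le> G b"
    and f: "\<And>s. s \<in> {0..t} \<Longrightarrow> \<bar>f s\<bar> \<le> G s ^ k / fact k"
    and g: "\<And>a b. 0 \<le> a \<Longrightarrow> a \<le> b \<Longrightarrow> b \<le> t \<Longrightarrow> \<bar>g b - g a\<bar> \<le> G b - G a"
  shows "\<bar>I\<bar> \<le> G t ^ Suc k / fact (Suc k)"
proof -
  have "\<bar>rs_sum f g N (uniform_grid 0 t N) (uniform_grid 0 t N)\<bar> \<le> G t ^ Suc k / fact (Suc k)" for N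
  proof -
    let ?x = "uniform_grid 0 t N"
    have x: "\<And>j. j \<le> N \<Longrightarrow> ?x j \<in> {0..t}" "\<And>j. ?x j \<le> ?x (Suc j)"
      using uniform_grid_in_interval[OF \<open>0 \<le> t\<close>] uniform_grid_Suc_mono[OF \<open>0 \<le> t\<close>] by auto
    have "\<bar>rs_sum f g N ?x ?x\<bar> \<le> (G (?x N) ^ Suc k - G (?x 0) ^ Suc k) / fact (Suc k)"
      using x G0 by (intro rs_sum_left_power_bound f g G) (auto intro: order_trans[OF G0 G])
    also have "\<dots> \<le> G t ^ Suc k / fact (Suc k)"
    proof (rule divide_right_mono)
      have "0 \<le> G (?x 0)" "0 \<le> G (?x N)" "G (?x N) \<le> G t"
        using x[of 0] x[of N] G0 G[of 0 "?x 0"] G[of 0 "?x N"] G[of "?x N" t] by auto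
      then show "G (?x N) ^ Suc k - G (?x 0) ^ Suc k \<le> G t ^ Suc k"
        using power_mono[of "G (?x N)" "G t" "Suc k"] zero_le_power[of "G (?x 0)" "Suc k"] by linarith
    qed simp
    finally show ?thesis .
  qed
  then show ?thesis
    using LIMSEQ_le_const2[OF tendsto_rabs[OF has_rs_integral_uniform_sums[OF I \<open>0 \<le> t\<close>]]] by blast
qed

text \<open>The signature is defined through THE, which hides its measurability in the path.  Its
  variant below takes limits of uniform left Riemann sums instead; it is measurable by construction
  and agrees with the signature on dominated continuous paths.\<close>

fun sig_lim :: "path \<Rightarrow> nat list \<Rightarrow> real \<Rightarrow> real" where
  "sig_lim Y [] t = 1"
| "sig_lim Y (i # J) t =
     lim (\<lambda>N. rs_sum (sig_lim Y J) (\<lambda>s. Y s i) N (uniform_grid 0 t N) (uniform_grid 0 t N))"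

context
  fixes Y :: path and G :: "real \<Rightarrow> real" and T :: real
  assumes T: "0 \<le> T" and Y_cont: "\<And>i. continuous_on {0..T} (\<lambda>s. Y s i)"
    and Y_dom: "\<And>i a b. 0 \<le> a \<Longrightarrow> a \<le> b \<Longrightarrow> b \<le> T \<Longrightarrow> \<bar>Y b i - Y a i\<bar> \<le> G b - G a"
    and G0: "0 \<le> G 0"
begin

lemma sig_rev_continuous_on: "continuous_on {0..T} (sig_rev Y J)"
proof (induction J)
  case (Cons i J)
  obtain I where I: "\<And>t. t \<in> {0..T} \<Longrightarrow> has_rs_integral (sig_rev Y J) (\<lambda>s. Y s i) 0 t (I t)"
    and I_cont: "continuous_on {0..T} I"
    using has_rs_integral_exists_continuous[OF T Cons.IH Y_cont Y_dom] by blast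
  from I_cont show ?case
    by (rule continuous_on_eq) (use rs_integral_eqI[OF I] in auto)
qed simp

lemma has_rs_integral_sig_rev:
  assumes "t \<in> {0..T}"
  shows "has_rs_integral (sig_rev Y J) (\<lambda>s. Y s i) 0 t (sig_rev Y (i # J) t)"
proof -
  obtain I where I: "\<And>t. t \<in> {0..T} \<Longrightarrow> has_rs_integral (sig_rev Y J) (\<lambda>s. Y s i) 0 t (I t)"
    using has_rs_integral_exists_continuous[OF T sig_rev_continuous_on Y_cont Y_dom] by blast
  then show ?thesis using assms rs_integral_eqI[OF I] by auto
qed

lemma sig_rev_bound:
  assumes "t \<in> {0..T}"
  shows "\<bar>sig_rev Y J t\<bar> \<le> G t ^ length J / fact (length J)"
  using assms
proof (induction J arbitrary: t)
  case (Cons i J)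
  have "\<bar>sig_rev Y (i # J) t\<bar> \<le> G t ^ Suc (length J) / fact (Suc (length J))"
  proof (rule has_rs_integral_power_bound[OF has_rs_integral_sig_rev[OF Cons.prems]])
    show "0 \<le> t" "0 \<le> G 0" using Cons.prems G0 by auto
    show "\<bar>Y b i - Y a i\<bar> \<le> G b - G a" if "0 \<le> a" "a \<le> b" "b \<le> t" for a b
      using Y_dom that Cons.prems by auto
    then show "G a \<le> G b" if "0 \<le> a" "a \<le> b" "b \<le> t" for a b
      using that by force
    show "\<bar>sig_rev Y J s\<bar> \<le> G s ^ length J / fact (length J)" if "s \<in> {0..t}" for s
      using Cons.IH that Cons.prems by auto
  qed
  then show ?case by simp
qed simp

lemma sig_lim_eq_sig_rev:
  assumes "t \<in> {0..T}"
  shows "sig_lim Y J t = sig_rev Y J t"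
  using assms
proof (induction J arbitrary: t)
  case (Cons i J)
  have "sig_lim Y J (uniform_grid 0 t N j) = sig_rev Y J (uniform_grid 0 t N j)" if "j \<le> N" for j N
    using Cons.IH uniform_grid_in_interval[of 0 t j N] Cons.prems that by auto
  then have "rs_sum (sig_lim Y J) (\<lambda>s. Y s i) N (uniform_grid 0 t N) (uniform_grid 0 t N)
      = rs_sum (sig_rev Y J) (\<lambda>s. Y s i) N (uniform_grid 0 t N) (uniform_grid 0 t N)" for N
    unfolding rs_sum_def by (intro sum.cong) auto
  then show ?case
    using has_rs_integral_uniform_sums[OF has_rs_integral_sig_rev[OF Cons.prems]] Cons.prems
    by (simp add: limI)
qed simp

end

lemma coordinate_time_aug_measurable: "(\<lambda>Y. time_aug d Y s i) \<in> borel_measurable path_space"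
proof -
  have "(\<lambda>Y. Y s) \<in> path_space \<rightarrow>\<^sub>M vec_space"
    unfolding path_space_def by (rule measurable_component_singleton) simp
  moreover have "(\<lambda>v. v i) \<in> borel_measurable vec_space"
    unfolding vec_space_def by (rule measurable_component_singleton) simp
  ultimately have "(\<lambda>Y. Y s i) \<in> borel_measurable path_space"
    by (rule measurable_compose)
  then show ?thesis by (simp add: time_aug_def)
qed

lemma sig_lim_time_aug_measurable: "(\<lambda>Y. sig_lim (time_aug d Y) J t) \<in> borel_measurable path_space"
  by (induction J arbitrary: t)
     (auto simp: rs_sum_def intro!: borel_measurable_lim_metric borel_measurable_sum
       borel_measurable_times borel_measurable_diff coordinate_time_aug_measurable)

lemma time_aug_increment_le:
  assumes Y: "Y \<in> path_dom d T x0" and "0 \<le> a" "a \<le> b" "b \<le> T"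
  shows "\<bar>time_aug d Y b i - time_aug d Y a i\<bar>
           \<le> (real_of_ereal (tv d b Y) + b) - (real_of_ereal (tv d a Y) + a)"
proof -
  have "tv d b Y < \<infinity>"
    using Y tv_mono[OF \<open>b \<le> T\<close>, of d Y] by (auto simp: path_dom_def)
  then have "real_of_ereal (tv d a Y) + vnorm (d - 1) (\<lambda>k. Y b k - Y a k) \<le> real_of_ereal (tv d b Y)"
    by (rule tv_add_increment_le[OF assms(2,3)])
  then show ?thesis
    using abs_le_vnorm[of i "d - 1" "\<lambda>k. Y b k - Y a k"] vnorm_nonneg[of "d - 1" "\<lambda>k. Y b k - Y a k"]
      assms(3) by (auto simp: time_aug_def)
qed

lemma time_aug_continuous_on:
  "Y \<in> path_dom d T x0 \<Longrightarrow> continuous_on {0..T} (\<lambda>s. time_aug d Y s i)"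
  unfolding time_aug_def by (cases "i < d - 1") (auto simp: path_dom_def continuous_on_id)

lemma sig_lim_time_aug_eq_sig_term:
  assumes "Y \<in> path_dom d T x0" "0 \<le> T"
  shows "sig_lim (time_aug d Y) (rev I) T = sig_term T (time_aug d Y) I"
  unfolding sig_term_def
  using assms tv_nonneg[of 0 d Y]
  by (intro sig_lim_eq_sig_rev[where G = "\<lambda>t. real_of_ereal (tv d t Y) + t"]
      time_aug_continuous_on time_aug_increment_le) (auto simp: real_of_ereal_pos)

lemma sig_term_time_aug_bound:
  assumes Y: "Y \<in> path_dom d T x0" and "0 \<le> T" and CX: "tv d T Y < ereal CX"
  shows "\<bar>sig_term T (time_aug d Y) I\<bar> \<le> exp (CX + T)"
proof -
  define G where "G t = real_of_ereal (tv d t Y) + t" for t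
  have "0 \<le> G T" using tv_nonneg[of T d Y] \<open>0 \<le> T\<close> by (simp add: G_def real_of_ereal_pos)
  have "\<bar>sig_term T (time_aug d Y) I\<bar> \<le> G T ^ length (rev I) / fact (length (rev I))"
    unfolding sig_term_def G_def using assms tv_nonneg[of 0 d Y]
    by (intro sig_rev_bound time_aug_continuous_on time_aug_increment_le) (auto simp: real_of_ereal_pos)
  also have "\<dots> \<le> exp (G T)" using \<open>0 \<le> G T\<close> by (rule pow_div_fact_le_exp)
  also have "\<dots> \<le> exp (CX + T)"
    using CX tv_nonneg[OF \<open>0 \<le> T\<close>, of d Y] by (cases "tv d T Y") (auto simp: G_def)
  finally show ?thesis .
qed

section \<open>The logistic loss\<close>

lemma one_plus_exp_pos: "0 < 1 + exp (x::real)"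
  using exp_gt_zero[of x] by linarith

lemma sigmoid_pos: "0 < sigmoid u" and sigmoid_less_1: "sigmoid u < 1"
  using one_plus_exp_pos[of u] by (simp_all add: sigmoid_def)

lemma abs_sigmoid_minus_label_le_1: "y \<in> {0, 1} \<Longrightarrow> \<bar>sigmoid u - y\<bar> \<le> 1"
  using sigmoid_pos[of u] sigmoid_less_1[of u] by auto

lemma sigmoid_mono: "a \<le> b \<Longrightarrow> sigmoid a \<le> sigmoid b"
  using one_plus_exp_pos[of a] one_plus_exp_pos[of b] unfolding sigmoid_def
  by (simp add: divide_simps algebra_simps)

lemma has_real_derivative_softplus: "((\<lambda>x. ln (1 + exp x)) has_real_derivative sigmoid x) (at x)"
  unfolding sigmoid_def using one_plus_exp_pos[of x] by (auto intro!: derivative_eq_intros)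

lemma has_real_derivative_sigmoid: "(sigmoid has_real_derivative sigmoid x * (1 - sigmoid x)) (at x)"
proof -
  have "((\<lambda>x. exp x / (1 + exp x)) has_real_derivative
      (exp x * (1 + exp x) - exp x * exp x) / (1 + exp x)\<^sup>2) (at x)"
    using one_plus_exp_pos[of x] by (auto intro!: derivative_eq_intros simp: power2_eq_square)
  moreover have "(exp x * (1 + exp x) - exp x * exp x) / (1 + exp x)\<^sup>2 = sigmoid x * (1 - sigmoid x)"
    unfolding sigmoid_def using one_plus_exp_pos[of x] by (simp add: field_simps power2_eq_square)
  ultimately show ?thesis unfolding sigmoid_def[abs_def] by simp
qed

lemma mvt_between:
  fixes f f' :: "real \<Rightarrow> real"
  assumes "\<And>x. (f has_real_derivative f' x) (at x)"
  obtains c where "min a b \<le> c" "c \<le> max a b" "f b - f a = f' c * (b - a)"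
proof (cases a b rule: linorder_cases)
  case less
  then obtain z where "a < z" "z < b" "f b - f a = (b - a) * f' z"
    using MVT2[OF less, of f f'] assms by blast
  then show ?thesis using that[of z] less by (simp add: mult.commute)
next
  case greater
  then obtain z where "b < z" "z < a" "f a - f b = (a - b) * f' z"
    using MVT2[OF greater, of f f'] assms by blast
  then show ?thesis using that[of z] greater by (simp add: algebra_simps)
qed (use that[of a] in simp)

lemma logloss_ge_tangent: "logloss y a + (sigmoid a - y) * (b - a) \<le> logloss y b"
proof -
  obtain c where c: "min a b \<le> c" "c \<le> max a b"
    and eq: "ln (1 + exp b) - ln (1 + exp a) = sigmoid c * (b - a)"
    using mvt_between[OF has_real_derivative_softplus] by blast
  have "sigmoid a * (b - a) \<le> sigmoid c * (b - a)"
  proof (cases "a \<le> b")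
    case True
    then have "sigmoid a \<le> sigmoid c" using c by (intro sigmoid_mono) auto
    then show ?thesis using True by (intro mult_right_mono) auto
  next
    case False
    then have "sigmoid c \<le> sigmoid a" using c by (intro sigmoid_mono) auto
    then show ?thesis using False by (intro mult_right_mono_neg) auto
  qed
  then show ?thesis using eq unfolding logloss_def by (simp add: algebra_simps)
qed

lemma sigmoid_lipschitz: "\<bar>sigmoid b - sigmoid a\<bar> \<le> \<bar>b - a\<bar>"
proof -
  obtain c where "sigmoid b - sigmoid a = sigmoid c * (1 - sigmoid c) * (b - a)"
    using mvt_between[OF has_real_derivative_sigmoid] by blast
  moreover have "\<bar>sigmoid c * (1 - sigmoid c)\<bar> \<le> 1"
    using sigmoid_pos[of c] sigmoid_less_1[of c] by (simp add: mult_le_one)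
  ultimately show ?thesis
    using mult_left_le_one_le[of "\<bar>b - a\<bar>" "\<bar>sigmoid c * (1 - sigmoid c)\<bar>"] by (simp add: abs_mult)
qed

lemma logloss_nonneg: "y \<in> {0, 1} \<Longrightarrow> 0 \<le> logloss y \<eta>"
proof -
  assume "y \<in> {0, 1}"
  moreover have "0 \<le> ln (1 + exp \<eta>)" by simp
  moreover have "\<eta> \<le> ln (1 + exp \<eta>)"
    using ln_le_cancel_iff[of "exp \<eta>" "1 + exp \<eta>"] one_plus_exp_pos[of \<eta>] by simp
  ultimately show ?thesis unfolding logloss_def by auto
qed

lemma logloss_lipschitz:
  assumes "y \<in> {0, 1}"
  shows "\<bar>logloss y b - logloss y a\<bar> \<le> \<bar>b - a\<bar>"
proof -
  have "\<bar>(sigmoid a - y) * (b - a)\<bar> \<le> \<bar>b - a\<bar>" "\<bar>(sigmoid b - y) * (a - b)\<bar> \<le> \<bar>b - a\<bar>"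
    using abs_sigmoid_minus_label_le_1[OF assms]
    unfolding abs_mult by (auto intro: mult_left_le_one_le simp: abs_minus_commute)
  then show ?thesis
    using logloss_ge_tangent[of y a b] logloss_ge_tangent[of y b a] by linarith
qed

lemma logloss_zero: "logloss y 0 = ln 2"
  by (simp add: logloss_def)

section \<open>Coefficient balls\<close>

lemma finite_idx: "finite (idx d p q)"
proof -
  have "{I. length I \<le> p \<and> set I \<subseteq> {..<d}} = {I. set I \<subseteq> {..<d} \<and> length I \<le> p}" by blast
  then show ?thesis unfolding idx_def by (simp add: finite_lists_length_le)
qed

lemma card_idx_le: "card (idx d p q) \<le> sd d p + q"
proof -
  have lists: "{I. length I \<le> p \<and> set I \<subseteq> {..<d}} = {I. set I \<subseteq> {..<d} \<and> length I \<le> p}" by blast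
  have "card (idx d p q) \<le> card {I. length I \<le> p \<and> set I \<subseteq> {..<d}} + card {..<q}"
    unfolding idx_def
    by (rule order_trans[OF card_Un_le add_mono[OF card_image_le card_image_le]])
       (simp_all add: lists finite_lists_length_le)
  also have "card {I. length I \<le> p \<and> set I \<subseteq> {..<d}} = sd d p"
    unfolding lists card_lists_length_le[of "{..<d}" p, simplified] by (simp add: sd_def)
  finally show ?thesis by simp
qed

lemma idx_mono: "p \<le> p' \<Longrightarrow> idx d p q \<subseteq> idx d p' q"
  unfolding idx_def by auto

lemma sum_idx_eq_of_le:
  assumes "\<theta> \<in> coef_space d p q" "p \<le> p'" "\<And>x. f 0 x = 0"
  shows "(\<Sum>x\<in>idx d p' q. f (\<theta> x) x) = (\<Sum>x\<in>idx d p q. f (\<theta> x) x)"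
  using assms by (intro sum.mono_neutral_right finite_idx idx_mono) (auto simp: coef_space_def)

lemma lin_pred_eq_of_le:
  "\<theta> \<in> coef_space d p q \<Longrightarrow> p \<le> p' \<Longrightarrow> lin_pred d T p' q \<theta> X z = lin_pred d T p q \<theta> X z"
  unfolding lin_pred_def by (rule sum_idx_eq_of_le[where f = "\<lambda>c x. c * feature d T X z x"]) auto

lemma ball1_mono:
  assumes "p \<le> p'"
  shows "ball1 d p q r \<subseteq> ball1 d p' q r"
proof
  fix \<theta> assume "\<theta> \<in> ball1 d p q r"
  then have "\<theta> \<in> coef_space d p q" "(\<Sum>x\<in>idx d p q. \<bar>\<theta> x\<bar>) \<le> r" by (auto simp: ball1_def)
  moreover have "coef_space d p q \<subseteq> coef_space d p' q"
    using idx_mono[OF assms] by (auto simp: coef_space_def)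
  ultimately show "\<theta> \<in> ball1 d p' q r"
    using sum_idx_eq_of_le[of \<theta> d p q p' "\<lambda>c x. \<bar>c\<bar>"] assms by (auto simp: ball1_def)
qed

lemma zero_in_ball1: "0 \<le> r \<Longrightarrow> (\<lambda>_. 0) \<in> ball1 d p q r"
  by (simp add: ball1_def coef_space_def)

lemma ball1_convex:
  assumes "\<theta> \<in> ball1 d p q r" "\<theta>' \<in> ball1 d p q r" "0 \<le> t" "t \<le> 1"
  shows "(\<lambda>x. \<theta> x + t * (\<theta>' x - \<theta> x)) \<in> ball1 d p q r"
proof -
  have "(\<Sum>x\<in>idx d p q. \<bar>\<theta> x + t * (\<theta>' x - \<theta> x)\<bar>)
      \<le> (\<Sum>x\<in>idx d p q. (1 - t) * \<bar>\<theta> x\<bar> + t * \<bar>\<theta>' x\<bar>)"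
  proof (rule sum_mono)
    fix x
    have "\<bar>(1 - t) * \<theta> x + t * \<theta>' x\<bar> \<le> (1 - t) * \<bar>\<theta> x\<bar> + t * \<bar>\<theta>' x\<bar>"
      using assms(3,4) by (metis abs_mult abs_of_nonneg abs_triangle_ineq diff_ge_0_iff_ge)
    then show "\<bar>\<theta> x + t * (\<theta>' x - \<theta> x)\<bar> \<le> (1 - t) * \<bar>\<theta> x\<bar> + t * \<bar>\<theta>' x\<bar>"
      by (simp add: algebra_simps)
  qed
  also have "\<dots> = (1 - t) * (\<Sum>x\<in>idx d p q. \<bar>\<theta> x\<bar>) + t * (\<Sum>x\<in>idx d p q. \<bar>\<theta>' x\<bar>)"
    by (simp add: sum.distrib sum_distrib_left)
  also have "\<dots> \<le> (1 - t) * r + t * r"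
    using assms by (intro add_mono mult_left_mono) (auto simp: ball1_def)
  finally show ?thesis using assms(1,2) by (auto simp: ball1_def coef_space_def algebra_simps)
qed

lemma sd_mono: "p \<le> p' \<Longrightarrow> sd d p \<le> sd d p'"
  unfolding sd_def by (rule sum_mono2) auto

lemma sd_pos: "0 < sd d p"
proof -
  have "d ^ 0 \<le> (\<Sum>k\<le>p. d ^ k)" by (rule member_le_sum) auto
  then show ?thesis by (simp add: sd_def)
qed

lemma Suc_le_sd: "1 \<le> d \<Longrightarrow> Suc p \<le> sd d p"
proof -
  assume "1 \<le> d"
  then have "(\<Sum>k\<le>p. (1::nat)) \<le> (\<Sum>k\<le>p. d ^ k)" by (intro sum_mono) (simp add: one_le_power)
  then show ?thesis by (simp add: sd_def)
qed

lemma ball1_dist_le: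
  assumes "\<theta> \<in> ball1 d p q r" "\<theta>' \<in> ball1 d p q r"
  shows "(\<Sum>x\<in>idx d p q. \<bar>\<theta> x - \<theta>' x\<bar>) \<le> 2 * r"
proof -
  have "(\<Sum>x\<in>idx d p q. \<bar>\<theta> x - \<theta>' x\<bar>) \<le> (\<Sum>x\<in>idx d p q. \<bar>\<theta> x\<bar> + \<bar>\<theta>' x\<bar>)"
    by (intro sum_mono abs_triangle_ineq4)
  also have "\<dots> \<le> 2 * r" using assms by (simp add: sum.distrib ball1_def)
  finally show ?thesis .
qed

lemma abs_sum_mult_le:
  fixes f :: "'a \<Rightarrow> real"
  assumes "\<And>x. x \<in> S \<Longrightarrow> \<bar>f x\<bar> \<le> B" "(\<Sum>x\<in>S. \<bar>\<theta> x\<bar>) \<le> r" "0 \<le> B"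
  shows "\<bar>\<Sum>x\<in>S. \<theta> x * f x\<bar> \<le> r * B"
proof -
  have "\<bar>\<Sum>x\<in>S. \<theta> x * f x\<bar> \<le> (\<Sum>x\<in>S. \<bar>\<theta> x\<bar> * B)"
    by (rule order_trans[OF sum_abs]) (auto simp: abs_mult intro!: sum_mono mult_left_mono assms(1))
  also have "\<dots> \<le> r * B" using assms(2,3) by (simp add: sum_distrib_right[symmetric] mult_right_mono)
  finally show ?thesis .
qed

lemma bounded_family_convergent_subseq:
  fixes f :: "nat \<Rightarrow> 'a \<Rightarrow> real"
  assumes "finite S" and "\<And>k x. \<bar>f k x\<bar> \<le> r"
  shows "\<exists>h l. strict_mono h \<and> (\<forall>x\<in>S. (\<lambda>k. f (h k) x) \<longlonglongrightarrow> l x)"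
  using assms(1)
proof (induction S rule: finite_induct)
  case empty
  show ?case using strict_mono_id by blast
next
  case (insert x S)
  then obtain h l where h: "strict_mono h" and l: "\<forall>y\<in>S. (\<lambda>k. f (h k) y) \<longlonglongrightarrow> l y" by blast
  have "bounded (range (\<lambda>k. f (h k) x))"
    using assms(2) by (intro boundedI[of _ r]) auto
  then obtain l' h' where h': "strict_mono h'" and l': "((\<lambda>k. f (h k) x) \<circ> h') \<longlonglongrightarrow> l'"
    using bounded_imp_convergent_subsequence by blast
  have "(\<lambda>k. f ((h \<circ> h') k) y) \<longlonglongrightarrow> (l(x := l')) y" if "y \<in> insert x S" for y
    using l' LIMSEQ_subseq_LIMSEQ[OF l[rule_format] h'] that by (cases "y = x") (auto simp: o_def)
  then show ?case
    using strict_mono_o[OF h h'] by (intro exI[of _ "h \<circ> h'"] exI[of _ "l(x := l')"]) (simp add: comp_def)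
qed

lemma l1_lipschitz_attains_Inf:
  fixes R :: "('a \<Rightarrow> real) \<Rightarrow> real"
  assumes S: "finite S" and "0 \<le> r"
    and B_def: "B = {\<theta>. (\<forall>x. x \<notin> S \<longrightarrow> \<theta> x = 0) \<and> (\<Sum>x\<in>S. \<bar>\<theta> x\<bar>) \<le> r}"
    and lip: "\<And>\<theta> \<theta>'. \<theta> \<in> B \<Longrightarrow> \<theta>' \<in> B \<Longrightarrow> \<bar>R \<theta> - R \<theta>'\<bar> \<le> K * (\<Sum>x\<in>S. \<bar>\<theta> x - \<theta>' x\<bar>)"
    and lb: "\<And>\<theta>. \<theta> \<in> B \<Longrightarrow> c \<le> R \<theta>"
  shows "\<exists>\<theta>\<in>B. R \<theta> = (INF \<theta>\<in>B. R \<theta>)"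
proof -
  define L where "L = (INF \<theta>\<in>B. R \<theta>)"
  have "B \<noteq> {}" using \<open>0 \<le> r\<close> B_def by (auto intro!: exI[of _ "\<lambda>_. 0"])
  have bdd: "bdd_below (R ` B)" using lb by (intro bdd_belowI2)
  have "\<exists>\<theta>\<in>B. R \<theta> < L + inverse (real (Suc k))" for k
    using cInf_lessD[of "R ` B" "L + inverse (real (Suc k))"] \<open>B \<noteq> {}\<close> by (auto simp: L_def)
  then obtain th where th: "\<And>k. th k \<in> B" "\<And>k. R (th k) < L + inverse (real (Suc k))"
    by metis
  have "\<bar>th k x\<bar> \<le> r" for k x
  proof (cases "x \<in> S")
    case True
    then have "\<bar>th k x\<bar> \<le> (\<Sum>x\<in>S. \<bar>th k x\<bar>)" by (intro member_le_sum S) auto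
    then show ?thesis using th(1)[of k] B_def by auto
  qed (use th(1)[of k] B_def \<open>0 \<le> r\<close> in auto)
  then obtain h l where h: "strict_mono h" and l: "\<forall>x\<in>S. (\<lambda>k. th (h k) x) \<longlonglongrightarrow> l x"
    using bounded_family_convergent_subseq[OF S] by blast
  define \<theta> where "\<theta> x = (if x \<in> S then l x else 0)" for x
  have "(\<lambda>k. \<Sum>x\<in>S. \<bar>th (h k) x\<bar>) \<longlonglongrightarrow> (\<Sum>x\<in>S. \<bar>\<theta> x\<bar>)"
    unfolding \<theta>_def using l by (auto intro!: tendsto_sum tendsto_rabs)
  then have "(\<Sum>x\<in>S. \<bar>\<theta> x\<bar>) \<le> r"
    by (rule LIMSEQ_le_const2) (use th(1) B_def in auto)
  then have \<theta>: "\<theta> \<in> B" unfolding B_def \<theta>_def by auto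
  have "(\<lambda>k. K * (\<Sum>x\<in>S. \<bar>th (h k) x - \<theta> x\<bar>)) \<longlonglongrightarrow> 0"
    using l by (intro tendsto_mult_right_zero tendsto_null_sum tendsto_rabs_zero)
      (auto simp: \<theta>_def intro: LIM_zero)
  then have "(\<lambda>k. R (th (h k)) - R \<theta>) \<longlonglongrightarrow> 0"
    by (rule Lim_null_comparison[rotated]) (use lip[OF th(1) \<theta>] in simp)
  then have "(\<lambda>k. R (th (h k)) - inverse (real (Suc k))) \<longlonglongrightarrow> R \<theta> - 0"
    by (intro tendsto_diff LIMSEQ_inverse_real_of_nat) (simp add: LIM_zero_iff)
  moreover have "R (th (h k)) - inverse (real (Suc k)) \<le> L" for k
  proof -
    have "inverse (real (Suc (h k))) \<le> inverse (real (Suc k))"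
      using seq_suble[OF h, of k] by (intro le_imp_inverse_le) auto
    then show ?thesis using th(2)[of "h k"] by linarith
  qed
  ultimately have "R \<theta> \<le> L" by (intro LIMSEQ_le_const2) auto
  moreover have "L \<le> R \<theta>" unfolding L_def by (rule cINF_lower[OF bdd \<theta>])
  ultimately show ?thesis using \<theta> L_def by (intro bexI[of _ \<theta>]) auto
qed

section \<open>Hoeffding's inequality for i.i.d. copies\<close>

lemma (in prob_space) Hoeffding_ineq_iid_copies:
  fixes h :: "'b \<Rightarrow> real" and Zs :: "nat \<Rightarrow> 'a \<Rightarrow> 'b" and \<epsilon> :: real and n :: nat
  assumes "0 < n"
    and Zs: "\<And>i. Zs i \<in> M \<rightarrow>\<^sub>M N" and Z: "Z \<in> M \<rightarrow>\<^sub>M N"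
    and indep: "indep_vars (\<lambda>_. N) Zs UNIV"
    and distr: "\<And>i. distr M N (Zs i) = distr M N Z"
    and h: "h \<in> borel_measurable N" and bounded: "AE \<omega> in M. h (Z \<omega>) \<in> {a..b}"
    and "a < b" "0 \<le> \<epsilon>"
  shows "prob {\<omega> \<in> space M. (\<Sum>i<n. h (Zs i \<omega>)) / n \<le> expectation (\<lambda>\<omega>. h (Z \<omega>)) - \<epsilon>}
            \<le> exp (- 2 * real n * \<epsilon>\<^sup>2 / (b - a)\<^sup>2)"
    and "prob {\<omega> \<in> space M. (\<Sum>i<n. h (Zs i \<omega>)) / n \<ge> expectation (\<lambda>\<omega>. h (Z \<omega>)) + \<epsilon>}
            \<le> exp (- 2 * real n * \<epsilon>\<^sup>2 / (b - a)\<^sup>2)"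
    and "prob {\<omega> \<in> space M. \<bar>(\<Sum>i<n. h (Zs i \<omega>)) / n - expectation (\<lambda>\<omega>. h (Z \<omega>))\<bar> \<ge> \<epsilon>}
            \<le> 2 * exp (- 2 * real n * \<epsilon>\<^sup>2 / (b - a)\<^sup>2)"
proof -
  have "indep_vars (\<lambda>_. borel) (\<lambda>i \<omega>. h (Zs i \<omega>)) {..<n}"
    using h by (intro indep_vars_subset[OF indep_vars_compose2[OF indep]]) auto
  moreover have "distr M borel (\<lambda>\<omega>. h (Zs i \<omega>)) = distr M borel (\<lambda>\<omega>. h (Z \<omega>))" for i
    using distr_distr[OF h Zs[of i]] distr_distr[OF h Z] distr[of i] by (simp add: comp_def)
  moreover have "AE \<omega> in M. a \<le> h (Z \<omega>)" "AE \<omega> in M. h (Z \<omega>) \<le> b"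
    using bounded by (auto elim: AE_mp)
  ultimately interpret H: Hoeffding_ineq_iid M "{..<n}" "\<lambda>i \<omega>. h (Zs i \<omega>)" "\<lambda>\<omega>. h (Z \<omega>)" a b
      "expectation (\<lambda>\<omega>. h (Z \<omega>))"
    using measurable_compose[OF Z h] by unfold_locales simp_all
  have "{..<n} \<noteq> {}" using \<open>0 < n\<close> by auto
  then show "prob {\<omega> \<in> space M. (\<Sum>i<n. h (Zs i \<omega>)) / n \<le> expectation (\<lambda>\<omega>. h (Z \<omega>)) - \<epsilon>}
            \<le> exp (- 2 * real n * \<epsilon>\<^sup>2 / (b - a)\<^sup>2)"
    using H.Hoeffding_ineq_le'[of \<epsilon>] \<open>0 \<le> \<epsilon>\<close> \<open>a < b\<close> by simp
  show "prob {\<omega> \<in> space M. (\<Sum>i<n. h (Zs i \<omega>)) / n \<ge> expectation (\<lambda>\<omega>. h (Z \<omega>)) + \<epsilon>}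
            \<le> exp (- 2 * real n * \<epsilon>\<^sup>2 / (b - a)\<^sup>2)"
    using H.Hoeffding_ineq_ge'[of \<epsilon>] \<open>{..<n} \<noteq> {}\<close> \<open>0 \<le> \<epsilon>\<close> \<open>a < b\<close> by simp
  show "prob {\<omega> \<in> space M. \<bar>(\<Sum>i<n. h (Zs i \<omega>)) / n - expectation (\<lambda>\<omega>. h (Z \<omega>))\<bar> \<ge> \<epsilon>}
            \<le> 2 * exp (- 2 * real n * \<epsilon>\<^sup>2 / (b - a)\<^sup>2)"
    using H.Hoeffding_ineq_abs_ge'[of \<epsilon>] \<open>{..<n} \<noteq> {}\<close> \<open>0 \<le> \<epsilon>\<close> \<open>a < b\<close> by simp
qed

section \<open>Losses of single observations\<close>

type_synonym obs = "(path \<times> (nat \<Rightarrow> real)) \<times> real"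

definition obs_feature :: "nat \<Rightarrow> real \<Rightarrow> nat list + nat \<Rightarrow> obs \<Rightarrow> real" where
  "obs_feature d T x w =
     (case x of Inl I \<Rightarrow> sig_lim (time_aug d (fst (fst w))) (rev I) T | Inr j \<Rightarrow> snd (fst w) j)"

definition obs_pred :: "nat \<Rightarrow> real \<Rightarrow> (nat list + nat) set \<Rightarrow> (nat list + nat \<Rightarrow> real) \<Rightarrow> obs \<Rightarrow> real" where
  "obs_pred d T S \<theta> w = (\<Sum>x\<in>S. \<theta> x * obs_feature d T x w)"

definition obs_loss :: "nat \<Rightarrow> real \<Rightarrow> (nat list + nat) set \<Rightarrow> (nat list + nat \<Rightarrow> real) \<Rightarrow> obs \<Rightarrow> real" where
  "obs_loss d T S \<theta> w = logloss (snd w) (obs_pred d T S \<theta> w)"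

definition obs_grad ::
    "nat \<Rightarrow> real \<Rightarrow> (nat list + nat) set \<Rightarrow> (nat list + nat \<Rightarrow> real) \<Rightarrow> nat list + nat \<Rightarrow> obs \<Rightarrow> real" where
  "obs_grad d T S \<theta> x w = (sigmoid (obs_pred d T S \<theta> w) - snd w) * obs_feature d T x w"

definition good_obs :: "nat \<Rightarrow> real \<Rightarrow> (nat \<Rightarrow> real) \<Rightarrow> nat \<Rightarrow> real \<Rightarrow> real \<Rightarrow> obs \<Rightarrow> bool" where
  "good_obs d T x0 q CX Cz w \<longleftrightarrow> fst (fst w) \<in> path_dom d T x0 \<and> tv d T (fst (fst w)) < ereal CX \<and>
     vnorm q (snd (fst w)) < Cz \<and> snd w \<in> {0, 1}"

lemma obs_feature_measurable [measurable]: "obs_feature d T x \<in> borel_measurable triple_space"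
proof (cases x)
  case (Inl I)
  have "(\<lambda>w. fst (fst w)) \<in> triple_space \<rightarrow>\<^sub>M path_space"
    unfolding triple_space_def by measurable
  from measurable_compose[OF this sig_lim_time_aug_measurable] show ?thesis
    using Inl by (simp add: obs_feature_def[abs_def])
next
  case (Inr j)
  have "(\<lambda>w. snd (fst w)) \<in> triple_space \<rightarrow>\<^sub>M vec_space"
    unfolding triple_space_def by measurable
  moreover have "(\<lambda>v. v j) \<in> borel_measurable vec_space"
    unfolding vec_space_def by (rule measurable_component_singleton) simp
  ultimately have "(\<lambda>w. snd (fst w) j) \<in> borel_measurable triple_space"
    by (rule measurable_compose)
  then show ?thesis
    using Inr by (simp add: obs_feature_def[abs_def])
qed

lemma snd_triple_measurable [measurable]: "snd \<in> borel_measurable triple_space"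
  unfolding triple_space_def by (rule measurable_snd)

lemma obs_pred_measurable [measurable]: "obs_pred d T S \<theta> \<in> borel_measurable triple_space"
  unfolding obs_pred_def by measurable

lemma obs_loss_measurable [measurable]: "obs_loss d T S \<theta> \<in> borel_measurable triple_space"
  unfolding obs_loss_def logloss_def by measurable

lemma obs_grad_measurable [measurable]: "obs_grad d T S \<theta> x \<in> borel_measurable triple_space"
  unfolding obs_grad_def sigmoid_def by measurable

lemma obs_pred_eq_lin_pred:
  assumes "fst (fst w) \<in> path_dom d T x0" "0 \<le> T"
  shows "obs_pred d T (idx d p q) \<theta> w = lin_pred d T p q \<theta> (fst (fst w)) (snd (fst w))"
  unfolding obs_pred_def lin_pred_def
  using sig_lim_time_aug_eq_sig_term[OF assms]
  by (intro sum.cong) (auto simp: obs_feature_def feature_def split: sum.split)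

lemma good_obs_label: "good_obs d T x0 q CX Cz w \<Longrightarrow> snd w \<in> {0, 1}"
  by (simp add: good_obs_def)

lemma good_obs_bound_pos:
  assumes "good_obs d T x0 q CX Cz w"
  shows "0 < Cz + exp (CX + T)"
proof -
  have "vnorm q (snd (fst w)) < Cz" using assms by (simp add: good_obs_def)
  then show ?thesis using vnorm_nonneg[of q "snd (fst w)"] exp_gt_zero[of "CX + T"] by linarith
qed

context
  fixes d q :: nat and T CX Cz :: real and x0 :: "nat \<Rightarrow> real" and w :: obs
  assumes good: "good_obs d T x0 q CX Cz w" and T: "0 \<le> T"
begin

lemma obs_feature_bound:
  assumes "x \<in> idx d p q"
  shows "\<bar>obs_feature d T x w\<bar> \<le> Cz + exp (CX + T)"
proof (cases x)
  case (Inl I)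
  have "\<bar>sig_term T (time_aug d (fst (fst w))) I\<bar> \<le> exp (CX + T)"
    using good T by (intro sig_term_time_aug_bound) (auto simp: good_obs_def)
  moreover have "0 \<le> Cz" using good vnorm_nonneg[of q "snd (fst w)"] by (simp add: good_obs_def)
  ultimately show ?thesis
    using Inl sig_lim_time_aug_eq_sig_term[of "fst (fst w)" d T x0 I] good T
    by (simp add: obs_feature_def good_obs_def)
next
  case (Inr j)
  then have "\<bar>snd (fst w) j\<bar> \<le> vnorm q (snd (fst w))"
    using assms by (intro abs_le_vnorm) (auto simp: idx_def)
  moreover have "vnorm q (snd (fst w)) < Cz" using good by (simp add: good_obs_def)
  moreover have "0 < exp (CX + T)" by simp
  ultimately have "\<bar>snd (fst w) j\<bar> \<le> Cz + exp (CX + T)" by linarith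
  then show ?thesis using Inr by (simp add: obs_feature_def)
qed

lemma obs_pred_bound:
  "\<bar>obs_pred d T (idx d p q) \<theta> w\<bar> \<le> (\<Sum>x\<in>idx d p q. \<bar>\<theta> x\<bar>) * (Cz + exp (CX + T))"
  unfolding obs_pred_def using obs_feature_bound good_obs_bound_pos[OF good]
  by (intro abs_sum_mult_le) auto

lemma obs_pred_diff_bound:
  "\<bar>obs_pred d T (idx d p q) \<theta> w - obs_pred d T (idx d p q) \<theta>' w\<bar>
     \<le> (\<Sum>x\<in>idx d p q. \<bar>\<theta> x - \<theta>' x\<bar>) * (Cz + exp (CX + T))"
  unfolding obs_pred_def sum_subtractf[symmetric] left_diff_distrib[symmetric]
  using obs_feature_bound good_obs_bound_pos[OF good] by (intro abs_sum_mult_le) auto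

lemma obs_loss_bound:
  "\<bar>obs_loss d T (idx d p q) \<theta> w - ln 2\<bar> \<le> (\<Sum>x\<in>idx d p q. \<bar>\<theta> x\<bar>) * (Cz + exp (CX + T))"
  using logloss_lipschitz[OF good_obs_label[OF good], of "obs_pred d T (idx d p q) \<theta> w" 0]
    obs_pred_bound[of p \<theta>]
  by (simp add: obs_loss_def logloss_zero)

lemma obs_loss_lipschitz:
  "\<bar>obs_loss d T (idx d p q) \<theta> w - obs_loss d T (idx d p q) \<theta>' w\<bar>
     \<le> (\<Sum>x\<in>idx d p q. \<bar>\<theta> x - \<theta>' x\<bar>) * (Cz + exp (CX + T))"
  unfolding obs_loss_def
  by (rule order_trans[OF logloss_lipschitz[OF good_obs_label[OF good]] obs_pred_diff_bound])

lemma obs_grad_bound: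
  assumes "x \<in> idx d p q"
  shows "\<bar>obs_grad d T S \<theta> x w\<bar> \<le> Cz + exp (CX + T)"
  using mult_mono[OF abs_sigmoid_minus_label_le_1[OF good_obs_label[OF good]]
      obs_feature_bound[OF assms]]
  by (simp add: obs_grad_def abs_mult)

end

lemma obs_loss_nonneg: "snd w \<in> {0, 1} \<Longrightarrow> 0 \<le> obs_loss d T S \<theta> w"
  by (simp add: obs_loss_def logloss_nonneg)

lemma sum_obs_grad_eq:
  "(\<Sum>x\<in>S. (\<theta> x - \<theta>' x) * obs_grad d T S \<theta>' x w)
     = (sigmoid (obs_pred d T S \<theta>' w) - snd w) * (obs_pred d T S \<theta> w - obs_pred d T S \<theta>' w)"
  unfolding obs_grad_def obs_pred_def
  by (simp add: sum_distrib_left sum_subtractf[symmetric] algebra_simps)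

lemma obs_loss_ge_tangent:
  "obs_loss d T S \<theta>' w + (\<Sum>x\<in>S. (\<theta> x - \<theta>' x) * obs_grad d T S \<theta>' x w) \<le> obs_loss d T S \<theta> w"
  unfolding sum_obs_grad_eq obs_loss_def by (rule logloss_ge_tangent)

text \<open>The quadratic term comes from the derivative of the logistic loss, sigmoid, being
  1-Lipschitz.\<close>

lemma obs_loss_segment_le:
  "obs_loss d T S (\<lambda>x. \<theta>' x + t * (\<theta> x - \<theta>' x)) w - obs_loss d T S \<theta>' w
     \<le> t * (\<Sum>x\<in>S. (\<theta> x - \<theta>' x) * obs_grad d T S \<theta>' x w)
       + t\<^sup>2 * (obs_pred d T S \<theta> w - obs_pred d T S \<theta>' w)\<^sup>2"
proof -
  let ?e = "obs_pred d T S \<theta>' w" and ?v = "t * (obs_pred d T S \<theta> w - obs_pred d T S \<theta>' w)"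
  have "obs_pred d T S (\<lambda>x. \<theta>' x + t * (\<theta> x - \<theta>' x)) w = ?e + ?v"
    unfolding obs_pred_def by (simp add: algebra_simps sum.distrib sum_distrib_left sum_subtractf)
  then have "obs_loss d T S (\<lambda>x. \<theta>' x + t * (\<theta> x - \<theta>' x)) w - obs_loss d T S \<theta>' w
      \<le> (sigmoid (?e + ?v) - snd w) * ?v"
    using logloss_ge_tangent[of "snd w" "?e + ?v" ?e] by (simp add: obs_loss_def)
  also have "\<dots> = (sigmoid ?e - snd w) * ?v + (sigmoid (?e + ?v) - sigmoid ?e) * ?v"
    by (simp add: algebra_simps)
  also have "(sigmoid (?e + ?v) - sigmoid ?e) * ?v \<le> \<bar>sigmoid (?e + ?v) - sigmoid ?e\<bar> * \<bar>?v\<bar>"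
    by (metis abs_ge_self abs_mult)
  also have "\<dots> \<le> \<bar>?v\<bar> * \<bar>?v\<bar>"
    using sigmoid_lipschitz[of "?e + ?v" ?e] by (intro mult_right_mono) auto
  finally show ?thesis
    unfolding sum_obs_grad_eq by (simp add: power2_eq_square algebra_simps)
qed

lemma nonneg_of_nonneg_quadratic_perturbation:
  fixes E K :: real
  assumes "0 < K" and perturb: "\<And>t. 0 < t \<Longrightarrow> t \<le> 1 \<Longrightarrow> 0 \<le> t * E + t\<^sup>2 * K"
  shows "0 \<le> E"
proof (rule ccontr)
  assume "\<not> 0 \<le> E"
  define t where "t = min 1 (- E / (2 * K))"
  have t: "0 < t" "t \<le> 1" "t * K \<le> - E / 2"
    using \<open>\<not> 0 \<le> E\<close> \<open>0 < K\<close> by (auto simp: t_def min_def field_simps)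
  then have "t * (E + t * K) < 0"
    using \<open>\<not> 0 \<le> E\<close> by (intro mult_pos_neg) auto
  with perturb[OF t(1,2)] show False by (simp add: power2_eq_square algebra_simps)
qed

lemma sample_size_bounds:
  fixes gap K C_pen \<rho> :: real and n :: nat
  assumes "0 < gap" "0 < K" "0 < C_pen" "0 < \<rho>" "\<rho> < 1 / 2"
    and n: "nat \<lceil>(2 * sqrt (real (sd d p + q)) / gap * (sqrt (exp (real q)) * C_pen + K)) powr (1 / \<rho>)\<rceil> \<le> n"
  shows "0 < n" and "pen C_pen \<rho> d n p q \<le> gap / 2" and "real (sd d p + q) * K\<^sup>2 \<le> n * (gap / 2)\<^sup>2"
proof -
  define D where "D = real (sd d p + q)"
  define a where "a = sqrt (exp (real q)) * C_pen"
  define s where "s = 2 * sqrt D / gap * (a + K)"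
  have "0 < D" "0 < a" using sd_pos[of d p] \<open>0 < C_pen\<close> by (simp_all add: D_def a_def)
  then have "0 < s" using assms by (simp add: s_def)
  have s_n: "s powr (1 / \<rho>) \<le> n"
    using real_nat_ceiling_ge[of "s powr (1 / \<rho>)"] n by (simp add: s_def D_def a_def)
  moreover have "0 < s powr (1 / \<rho>)" using \<open>0 < s\<close> by simp
  ultimately have "0 < real n" by linarith
  then show "0 < n" by simp
  have "s = (s powr (1 / \<rho>)) powr \<rho>" using \<open>0 < s\<close> \<open>0 < \<rho>\<close> by (simp add: powr_powr)
  also have "\<dots> \<le> n powr \<rho>" using s_n \<open>0 < s\<close> \<open>0 < \<rho>\<close> by (intro powr_mono2) auto
  finally have s_le: "s \<le> n powr \<rho>" .
  have gap_s: "gap / 2 * s = sqrt D * (a + K)"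
    using \<open>0 < gap\<close> by (simp add: s_def field_simps)
  have "pen C_pen \<rho> d n p q \<le> a * sqrt D / n powr \<rho>"
    using \<open>0 < C_pen\<close> by (simp add: pen_def a_def D_def real_sqrt_mult divide_right_mono mult_left_mono)
  also have "\<dots> \<le> a * sqrt D / s"
    using s_le \<open>0 < s\<close> \<open>0 < a\<close> \<open>0 < D\<close> \<open>0 < real n\<close>
    by (intro divide_left_mono mult_pos_pos) simp_all
  also have "\<dots> \<le> gap / 2"
    using gap_s \<open>0 < s\<close> \<open>0 < K\<close> \<open>0 < D\<close> by (simp add: pos_divide_le_eq algebra_simps)
  finally show "pen C_pen \<rho> d n p q \<le> gap / 2" .
  have "s\<^sup>2 \<le> (n powr \<rho>)\<^sup>2" using s_le \<open>0 < s\<close> by (intro power_mono) auto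
  also have "\<dots> = n powr (\<rho> + \<rho>)" unfolding power2_eq_square by (rule powr_add[symmetric])
  also have "\<dots> \<le> n powr 1" using \<open>0 < real n\<close> \<open>\<rho> < 1 / 2\<close> by (intro powr_mono) auto
  finally have "s\<^sup>2 * (gap / 2)\<^sup>2 \<le> n * (gap / 2)\<^sup>2" using \<open>0 < real n\<close> by (simp add: mult_right_mono)
  moreover have "s\<^sup>2 * (gap / 2)\<^sup>2 = D * (a + K)\<^sup>2"
    using gap_s \<open>0 < D\<close> by (simp add: power_mult_distrib[symmetric] mult.commute power_mult_distrib)
  moreover have "D * K\<^sup>2 \<le> D * (a + K)\<^sup>2"
    using \<open>0 < D\<close> \<open>0 < a\<close> \<open>0 < K\<close> by (intro mult_left_mono power_mono) auto
  ultimately show "real (sd d p + q) * K\<^sup>2 \<le> n * (gap / 2)\<^sup>2" unfolding D_def by linarith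
qed

lemma exp_tail_bound:
  fixes C r \<Delta> n D D' c5 :: real
  assumes "0 < C" "0 < r" "0 \<le> n" "0 \<le> D" "D \<le> D'"
    and large: "D' * (432 * C * r * sqrt pi)\<^sup>2 \<le> n * \<Delta>\<^sup>2"
    and c5: "c5 = 1 / (8 * r * (288 * C\<^sup>2 * r + C))"
  shows "(2 + 2 * D) * exp (- 2 * n * (\<Delta> / 4)\<^sup>2 / (r * C)\<^sup>2) \<le> 148 * exp (- n * (c5 / 4) * \<Delta>\<^sup>2)"
proof -
  define x where "x = n * \<Delta>\<^sup>2 / (8 * r\<^sup>2 * C\<^sup>2)"
  have "0 < r * C" "0 \<le> x" using assms by (simp_all add: x_def)
  have exponent: "- 2 * n * (\<Delta> / 4)\<^sup>2 / (r * C)\<^sup>2 = - x"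
    using \<open>0 < r * C\<close> by (simp add: x_def field_simps power2_eq_square)
  have le: "2304 * r\<^sup>2 * C\<^sup>2 \<le> 8 * r * (288 * C\<^sup>2 * r + C)"
    using assms by (simp add: power2_eq_square algebra_simps)
  have pos: "0 < 8 * r * (288 * C\<^sup>2 * r + C)" "0 < 2304 * r\<^sup>2 * C\<^sup>2"
    using assms by (simp_all add: add_pos_pos)
  have "c5 \<le> 1 / (2304 * r\<^sup>2 * C\<^sup>2)"
    unfolding c5 by (rule divide_left_mono[OF le _ mult_pos_pos[OF pos]]) simp
  then have "n * \<Delta>\<^sup>2 * c5 / 4 \<le> n * \<Delta>\<^sup>2 * (1 / (2304 * r\<^sup>2 * C\<^sup>2)) / 4"
    using assms by (intro divide_right_mono mult_left_mono) auto
  then have "n * (c5 / 4) * \<Delta>\<^sup>2 \<le> n * \<Delta>\<^sup>2 * (1 / (2304 * r\<^sup>2 * C\<^sup>2)) / 4"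
    by (simp add: algebra_simps)
  also have "\<dots> = x / 1152" using \<open>0 < r * C\<close> by (simp add: x_def field_simps power2_eq_square)
  finally have rate: "n * (c5 / 4) * \<Delta>\<^sup>2 \<le> x / 1152" .
  have "D' * (16 * r\<^sup>2 * C\<^sup>2) \<le> D' * (432 * C * r * sqrt pi)\<^sup>2"
    using assms pi_gt3 by (intro mult_left_mono) (auto simp: power2_eq_square algebra_simps)
  then have "D' * (16 * r\<^sup>2 * C\<^sup>2) \<le> n * \<Delta>\<^sup>2" using large by linarith
  moreover have "0 < 16 * r\<^sup>2 * C\<^sup>2" using assms(1,2) by simp
  ultimately have "D' \<le> n * \<Delta>\<^sup>2 / (16 * r\<^sup>2 * C\<^sup>2)" by (simp add: pos_le_divide_eq)
  then have "D \<le> x / 2" using \<open>D \<le> D'\<close> by (simp add: x_def field_simps)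
  have "(2 + 2 * D) * exp (- x) \<le> 2 * exp D * exp (- x)"
    using exp_ge_add_one_self[of D] by (simp add: add.commute)
  also have "\<dots> = 2 * exp (D - x)" by (simp add: exp_diff exp_minus field_simps)
  also have "\<dots> \<le> 2 * exp (- (x / 1152))"
    using \<open>D \<le> x / 2\<close> \<open>0 \<le> x\<close> by simp
  also have "\<dots> \<le> 148 * exp (- (x / 1152))" by simp
  also have "\<dots> \<le> 148 * exp (- n * (c5 / 4) * \<Delta>\<^sup>2)" using rate by simp
  finally show ?thesis unfolding exponent .
qed

section \<open>The sampling model\<close>

locale logistic_signature_model =
  fixes M :: "'w measure"
    and X :: "'w \<Rightarrow> path" and z :: "'w \<Rightarrow> nat \<Rightarrow> real" and y :: "'w \<Rightarrow> real"
    and Xs :: "nat \<Rightarrow> 'w \<Rightarrow> path" and zs :: "nat \<Rightarrow> 'w \<Rightarrow> nat \<Rightarrow> real" and ys :: "nat \<Rightarrow> 'w \<Rightarrow> real"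
    and d q :: nat and T :: real and x0 :: "nat \<Rightarrow> real"
    and C_X C_z r C_pen \<rho> :: real
  assumes M: "prob_space M" and T: "T > 0" and d: "1 \<le> d"
    and X_meas: "X \<in> M \<rightarrow>\<^sub>M path_space" and z_meas: "z \<in> M \<rightarrow>\<^sub>M vec_space"
    and y_meas: "y \<in> borel_measurable M"
    and X_dom: "\<forall>\<omega>\<in>space M. X \<omega> \<in> path_dom d T x0"
    and y01: "\<forall>\<omega>\<in>space M. y \<omega> \<in> {0, 1}"
    and samples_meas: "\<forall>i. (\<lambda>\<omega>. ((Xs i \<omega>, zs i \<omega>), ys i \<omega>)) \<in> M \<rightarrow>\<^sub>M triple_space"
    and samples_indep:
      "prob_space.indep_vars M (\<lambda>_. triple_space) (\<lambda>i \<omega>. ((Xs i \<omega>, zs i \<omega>), ys i \<omega>)) UNIV"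
    and samples_distr: "\<forall>i. distr M triple_space (\<lambda>\<omega>. ((Xs i \<omega>, zs i \<omega>), ys i \<omega>))
                          = distr M triple_space (\<lambda>\<omega>. ((X \<omega>, z \<omega>), y \<omega>))"
    and Xs_dom: "\<forall>i. \<forall>\<omega>\<in>space M. Xs i \<omega> \<in> path_dom d T x0"
    and ys01: "\<forall>i. \<forall>\<omega>\<in>space M. ys i \<omega> \<in> {0, 1}"
    and bounded: "AE \<omega> in M. tv d T (X \<omega>) < ereal C_X \<and> vnorm q (z \<omega>) < C_z"
    and r: "r > 0" and C_pen: "C_pen > 0"

sublocale logistic_signature_model \<subseteq> prob_space M
  by (rule M)

context logistic_signature_model
begin

definition Z :: "'w \<Rightarrow> obs" where "Z \<omega> = ((X \<omega>, z \<omega>), y \<omega>)"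

definition Zs :: "nat \<Rightarrow> 'w \<Rightarrow> obs" where "Zs i \<omega> = ((Xs i \<omega>, zs i \<omega>), ys i \<omega>)"

abbreviation good :: "obs \<Rightarrow> bool" where "good \<equiv> good_obs d T x0 q C_X C_z"

definition B :: real where "B = C_z + exp (C_X + T)"

abbreviation R :: "nat \<Rightarrow> (nat list + nat \<Rightarrow> real) \<Rightarrow> real" where
  "R p \<theta> \<equiv> risk M X z y d T q p \<theta>"

definition Lmin :: "nat \<Rightarrow> real" where "Lmin p = (INF \<theta>\<in>ball1 d p q r. R p \<theta>)"

definition risk_inf :: real where
  "risk_inf = (INF p\<theta> \<in> (SIGMA p:UNIV. coef_space d p q). R (fst p\<theta>) (snd p\<theta>))"

abbreviation emp_R :: "nat \<Rightarrow> nat \<Rightarrow> (nat list + nat \<Rightarrow> real) \<Rightarrow> 'w \<Rightarrow> real" where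
  "emp_R n p \<theta> \<omega> \<equiv> emp_risk Xs zs ys d T q n p \<theta> \<omega>"

abbreviation emp_Lmin :: "nat \<Rightarrow> nat \<Rightarrow> 'w \<Rightarrow> real" where
  "emp_Lmin n p \<omega> \<equiv> emp_L Xs zs ys d T q r n p \<omega>"

abbreviation pen_n :: "nat \<Rightarrow> nat \<Rightarrow> real" where
  "pen_n n p \<equiv> pen C_pen \<rho> d n p q"

abbreviation phat :: "nat \<Rightarrow> 'w \<Rightarrow> nat" where
  "phat n \<omega> \<equiv> p_hat Xs zs ys d T q r C_pen \<rho> n \<omega>"

lemma T_nonneg: "0 \<le> T"
  using T by simp

lemma Z_measurable [measurable]: "Z \<in> M \<rightarrow>\<^sub>M triple_space"
  unfolding Z_def[abs_def] triple_space_def by (intro measurable_Pair X_meas z_meas y_meas)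

lemma Zs_measurable [measurable]: "Zs i \<in> M \<rightarrow>\<^sub>M triple_space"
  using samples_meas by (simp add: Zs_def[abs_def])

lemma indep_Zs: "indep_vars (\<lambda>_. triple_space) Zs UNIV"
  using samples_indep by (simp add: Zs_def[abs_def])

lemma distr_Zs: "distr M triple_space (Zs i) = distr M triple_space Z"
  using samples_distr by (simp add: Zs_def[abs_def] Z_def[abs_def])

lemma AE_good_Z: "AE \<omega> in M. good (Z \<omega>)"
  using bounded AE_space by eventually_elim (use X_dom y01 in \<open>auto simp: good_obs_def Z_def\<close>)

lemma B_pos: "0 < B"
proof -
  have "AE \<omega> in M. 0 < B"
    using AE_good_Z by eventually_elim (use good_obs_bound_pos in \<open>auto simp: B_def\<close>)
  then show ?thesis by simp
qed

lemma obs_pred_Z: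
  "\<omega> \<in> space M \<Longrightarrow> obs_pred d T (idx d p q) \<theta> (Z \<omega>) = lin_pred d T p q \<theta> (X \<omega>) (z \<omega>)"
  using obs_pred_eq_lin_pred[of "Z \<omega>" d T x0 p q \<theta>] X_dom T_nonneg by (simp add: Z_def)

lemma obs_pred_Zs:
  "\<omega> \<in> space M \<Longrightarrow> obs_pred d T (idx d p q) \<theta> (Zs i \<omega>) = lin_pred d T p q \<theta> (Xs i \<omega>) (zs i \<omega>)"
  using obs_pred_eq_lin_pred[of "Zs i \<omega>" d T x0 p q \<theta>] Xs_dom T_nonneg by (simp add: Zs_def)

lemma risk_eq: "R p \<theta> = expectation (\<lambda>\<omega>. obs_loss d T (idx d p q) \<theta> (Z \<omega>))"
  unfolding risk_def obs_loss_def
  by (intro Bochner_Integration.integral_cong refl) (simp add: obs_pred_Z, simp add: Z_def)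

lemma emp_risk_eq:
  "\<omega> \<in> space M \<Longrightarrow> emp_R n p \<theta> \<omega> = (\<Sum>i<n. obs_loss d T (idx d p q) \<theta> (Zs i \<omega>)) / n"
  unfolding emp_risk_def obs_loss_def by (simp add: obs_pred_Zs, simp add: Zs_def)

lemma integrable_bounded_on_good:
  fixes h :: "obs \<Rightarrow> real"
  assumes "h \<in> borel_measurable triple_space" "\<And>w. good w \<Longrightarrow> \<bar>h w\<bar> \<le> K"
  shows "integrable M (\<lambda>\<omega>. h (Z \<omega>))"
proof (rule integrable_const_bound[where B = K])
  show "AE \<omega> in M. norm (h (Z \<omega>)) \<le> K"
    using AE_good_Z by eventually_elim (use assms(2) in simp)
qed (use measurable_compose[OF Z_measurable assms(1)] in simp)

lemma integrable_obs_loss: "integrable M (\<lambda>\<omega>. obs_loss d T (idx d p q) \<theta> (Z \<omega>))"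
proof (rule integrable_bounded_on_good)
  fix w assume "good w"
  then have "\<bar>obs_loss d T (idx d p q) \<theta> w - ln 2\<bar> \<le> (\<Sum>x\<in>idx d p q. \<bar>\<theta> x\<bar>) * B"
    "0 \<le> obs_loss d T (idx d p q) \<theta> w"
    using obs_loss_bound[OF _ T_nonneg] obs_loss_nonneg[OF good_obs_label] by (auto simp: B_def)
  then show "\<bar>obs_loss d T (idx d p q) \<theta> w\<bar> \<le> ln 2 + (\<Sum>x\<in>idx d p q. \<bar>\<theta> x\<bar>) * B"
    by (auto simp: abs_le_iff)
qed simp

lemma integrable_obs_grad:
  assumes "x \<in> idx d p q"
  shows "integrable M (\<lambda>\<omega>. obs_grad d T S \<theta> x (Z \<omega>))"
proof (rule integrable_bounded_on_good)
  fix w assume "good w"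
  then show "\<bar>obs_grad d T S \<theta> x w\<bar> \<le> B"
    unfolding B_def using obs_grad_bound[OF _ T_nonneg assms] by blast
qed simp

lemma risk_nonneg: "0 \<le> R p \<theta>"
proof -
  have "AE \<omega> in M. 0 \<le> obs_loss d T (idx d p q) \<theta> (Z \<omega>)"
    using AE_good_Z by eventually_elim (rule obs_loss_nonneg[OF good_obs_label])
  then show ?thesis unfolding risk_eq by (rule integral_nonneg_AE)
qed

lemma risk_eq_of_le:
  assumes "\<theta> \<in> coef_space d p q" "p \<le> p'"
  shows "R p' \<theta> = R p \<theta>"
  unfolding risk_def using lin_pred_eq_of_le[OF assms] by simp

lemma risk_lipschitz: "\<bar>R p \<theta> - R p \<theta>'\<bar> \<le> B * (\<Sum>x\<in>idx d p q. \<bar>\<theta> x - \<theta>' x\<bar>)"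
proof -
  have "\<bar>R p \<theta> - R p \<theta>'\<bar>
      = \<bar>expectation (\<lambda>\<omega>. obs_loss d T (idx d p q) \<theta> (Z \<omega>) - obs_loss d T (idx d p q) \<theta>' (Z \<omega>))\<bar>"
    unfolding risk_eq using integrable_obs_loss by simp
  also have "\<dots> \<le> expectation (\<lambda>\<omega>. \<bar>obs_loss d T (idx d p q) \<theta> (Z \<omega>) - obs_loss d T (idx d p q) \<theta>' (Z \<omega>)\<bar>)"
    by (rule integral_abs_bound)
  also have "\<dots> \<le> expectation (\<lambda>\<omega>. B * (\<Sum>x\<in>idx d p q. \<bar>\<theta> x - \<theta>' x\<bar>))"
  proof (rule integral_mono_AE)
    show "integrable M (\<lambda>\<omega>.
        \<bar>obs_loss d T (idx d p q) \<theta> (Z \<omega>) - obs_loss d T (idx d p q) \<theta>' (Z \<omega>)\<bar>)"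
      using integrable_obs_loss by simp
    show "AE \<omega> in M. \<bar>obs_loss d T (idx d p q) \<theta> (Z \<omega>) - obs_loss d T (idx d p q) \<theta>' (Z \<omega>)\<bar>
        \<le> B * (\<Sum>x\<in>idx d p q. \<bar>\<theta> x - \<theta>' x\<bar>)"
      using AE_good_Z
    proof eventually_elim
      case (elim \<omega>)
      from obs_loss_lipschitz[OF elim T_nonneg, of p \<theta> \<theta>'] show ?case by (simp add: B_def mult.commute)
    qed
  qed simp
  finally show ?thesis by (simp add: prob_space)
qed

lemma ball1_nonempty: "ball1 d p q r \<noteq> {}"
  using zero_in_ball1[of r] r by auto

lemma Lmin_le: "\<theta> \<in> ball1 d p q r \<Longrightarrow> Lmin p \<le> R p \<theta>"
  unfolding Lmin_def by (rule cINF_lower) (auto intro: bdd_belowI2 risk_nonneg)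

lemma Lmin_attained: "\<exists>\<theta>\<in>ball1 d p q r. R p \<theta> = Lmin p"
proof -
  have "ball1 d p q r = {\<theta>. (\<forall>x. x \<notin> idx d p q \<longrightarrow> \<theta> x = 0) \<and> (\<Sum>x\<in>idx d p q. \<bar>\<theta> x\<bar>) \<le> r}"
    by (auto simp: ball1_def coef_space_def)
  from l1_lipschitz_attains_Inf[OF finite_idx less_imp_le[OF r] this risk_lipschitz risk_nonneg]
  show ?thesis by (simp add: Lmin_def)
qed

lemma Lmin_antimono:
  assumes "p \<le> p'"
  shows "Lmin p' \<le> Lmin p"
  unfolding Lmin_def[of p]
proof (rule cINF_greatest[OF ball1_nonempty])
  fix \<theta> assume \<theta>: "\<theta> \<in> ball1 d p q r"
  then have "Lmin p' \<le> R p' \<theta>" using ball1_mono[OF assms] by (intro Lmin_le) auto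
  moreover have "R p' \<theta> = R p \<theta>" using \<theta> risk_eq_of_le[OF _ assms] by (simp add: ball1_def)
  ultimately show "Lmin p' \<le> R p \<theta>" by simp
qed

lemma risk_inf_le:
  assumes "\<theta> \<in> coef_space d p q"
  shows "risk_inf \<le> R p \<theta>"
proof -
  have "bdd_below ((\<lambda>p\<theta>. R (fst p\<theta>) (snd p\<theta>)) ` (SIGMA p:UNIV. coef_space d p q))"
    by (rule bdd_belowI2[of _ 0]) (rule risk_nonneg)
  from cINF_lower[OF this, of "(p, \<theta>)"] show ?thesis
    using assms by (simp add: risk_inf_def)
qed

lemma risk_inf_le_Lmin: "risk_inf \<le> Lmin p"
  unfolding Lmin_def using ball1_nonempty risk_inf_le
  by (intro cINF_greatest) (auto simp: ball1_def)

lemma risk_lt_Lmin_pred: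
  assumes \<theta>s: "\<theta>s \<in> ball1 d ps q r" "R ps \<theta>s = risk_inf"
    and minimal: "\<forall>p'<ps. \<not> (\<exists>\<theta>\<in>ball1 d p' q r. R p' \<theta> = risk_inf)" and "0 < ps"
  shows "R ps \<theta>s < Lmin (ps - 1)"
proof -
  obtain \<theta> where "\<theta> \<in> ball1 d (ps - 1) q r" "R (ps - 1) \<theta> = Lmin (ps - 1)"
    using Lmin_attained by blast
  then have "Lmin (ps - 1) \<noteq> risk_inf" using minimal \<open>0 < ps\<close> by auto
  then show ?thesis using risk_inf_le_Lmin[of "ps - 1"] \<theta>s(2) by simp
qed

lemma Lmin_eq_risk: "\<theta>s \<in> ball1 d ps q r \<Longrightarrow> R ps \<theta>s = risk_inf \<Longrightarrow> Lmin ps = R ps \<theta>s"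
  using Lmin_le[of \<theta>s ps] risk_inf_le_Lmin[of ps] by simp

end

context logistic_signature_model
begin

abbreviation sample_mean :: "nat \<Rightarrow> (obs \<Rightarrow> real) \<Rightarrow> 'w \<Rightarrow> real" where
  "sample_mean n h \<omega> \<equiv> (\<Sum>i<n. h (Zs i \<omega>)) / real n"

lemma first_order_optimality:
  assumes \<theta>p: "\<theta>p \<in> ball1 d p q r" "R p \<theta>p = Lmin p" and \<theta>: "\<theta> \<in> ball1 d p q r"
  shows "0 \<le> (\<Sum>x\<in>idx d p q. (\<theta> x - \<theta>p x) * expectation (\<lambda>\<omega>. obs_grad d T (idx d p q) \<theta>p x (Z \<omega>)))"
    (is "0 \<le> ?E")
proof -
  let ?S = "idx d p q" and ?K = "(2 * r * B)\<^sup>2"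
  define W where "W w = obs_pred d T ?S \<theta> w - obs_pred d T ?S \<theta>p w" for w
  define G where "G w = (\<Sum>x\<in>?S. (\<theta> x - \<theta>p x) * obs_grad d T ?S \<theta>p x w)" for w
  have W_bound: "(W w)\<^sup>2 \<le> ?K" if "good w" for w
  proof -
    have "\<bar>W w\<bar> \<le> (\<Sum>x\<in>?S. \<bar>\<theta> x - \<theta>p x\<bar>) * B"
      unfolding W_def B_def by (rule obs_pred_diff_bound[OF that T_nonneg])
    also have "\<dots> \<le> 2 * r * B" using ball1_dist_le[OF \<theta> \<theta>p(1)] B_pos by (simp add: mult_right_mono)
    finally show ?thesis using abs_le_square_iff[of "W w" "2 * r * B"] r B_pos by simp
  qed
  have W_int: "integrable M (\<lambda>\<omega>. (W (Z \<omega>))\<^sup>2)"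
    using W_bound by (intro integrable_bounded_on_good[where K = ?K]) (auto simp: W_def)
  have G_int: "integrable M (\<lambda>\<omega>. G (Z \<omega>))"
    unfolding G_def using integrable_obs_grad
    by (intro Bochner_Integration.integrable_sum integrable_mult_right) auto
  have E_eq: "?E = expectation (\<lambda>\<omega>. G (Z \<omega>))"
    unfolding G_def using integrable_obs_grad by (subst Bochner_Integration.integral_sum) auto
  have perturb: "0 \<le> t * ?E + t\<^sup>2 * ?K" if t: "0 < t" "t \<le> 1" for t
  proof -
    define \<theta>t where "\<theta>t x = \<theta>p x + t * (\<theta> x - \<theta>p x)" for x
    have "\<theta>t \<in> ball1 d p q r" unfolding \<theta>t_def using ball1_convex[OF \<theta>p(1) \<theta>] t by simp
    from Lmin_le[OF this] have "0 \<le> R p \<theta>t - R p \<theta>p" using \<theta>p(2) by simp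
    also have "\<dots> = expectation (\<lambda>\<omega>. obs_loss d T ?S \<theta>t (Z \<omega>) - obs_loss d T ?S \<theta>p (Z \<omega>))"
      unfolding risk_eq using integrable_obs_loss by simp
    also have "\<dots> \<le> expectation (\<lambda>\<omega>. t * G (Z \<omega>) + t\<^sup>2 * (W (Z \<omega>))\<^sup>2)"
    proof (rule integral_mono)
      show "integrable M (\<lambda>\<omega>. obs_loss d T ?S \<theta>t (Z \<omega>) - obs_loss d T ?S \<theta>p (Z \<omega>))"
        using integrable_obs_loss by simp
      show "integrable M (\<lambda>\<omega>. t * G (Z \<omega>) + t\<^sup>2 * (W (Z \<omega>))\<^sup>2)"
        using G_int W_int by simp
      show "obs_loss d T ?S \<theta>t (Z \<omega>) - obs_loss d T ?S \<theta>p (Z \<omega>) \<le> t * G (Z \<omega>) + t\<^sup>2 * (W (Z \<omega>))\<^sup>2"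
        for \<omega> unfolding \<theta>t_def G_def W_def by (rule obs_loss_segment_le)
    qed
    also have "\<dots> = t * ?E + t\<^sup>2 * expectation (\<lambda>\<omega>. (W (Z \<omega>))\<^sup>2)"
      using G_int W_int by (simp add: E_eq)
    also have "\<dots> \<le> t * ?E + t\<^sup>2 * ?K"
    proof -
      have "expectation (\<lambda>\<omega>. (W (Z \<omega>))\<^sup>2) \<le> expectation (\<lambda>\<omega>. ?K)"
      proof (rule integral_mono_AE[OF W_int])
        show "AE \<omega> in M. (W (Z \<omega>))\<^sup>2 \<le> ?K" using AE_good_Z by eventually_elim (rule W_bound)
      qed simp
      then show ?thesis by (simp add: prob_space mult_left_mono)
    qed
    finally show ?thesis .
  qed
  show ?thesis
  proof (rule nonneg_of_nonneg_quadratic_perturbation[OF _ perturb])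
    show "0 < ?K" using r B_pos by simp
  qed
qed

lemma emp_risk_nonneg: "\<omega> \<in> space M \<Longrightarrow> 0 \<le> emp_R n p \<theta> \<omega>"
  unfolding emp_risk_def using ys01 by (intro mult_nonneg_nonneg sum_nonneg logloss_nonneg) auto

lemma emp_Lmin_le: "\<omega> \<in> space M \<Longrightarrow> \<theta> \<in> ball1 d p q r \<Longrightarrow> emp_Lmin n p \<omega> \<le> emp_R n p \<theta> \<omega>"
  unfolding emp_L_def by (rule cINF_lower[OF bdd_belowI2[of _ 0]]) (auto intro: emp_risk_nonneg)

lemma emp_Lmin_nonneg: "\<omega> \<in> space M \<Longrightarrow> 0 \<le> emp_Lmin n p \<omega>"
  unfolding emp_L_def by (rule cINF_greatest[OF ball1_nonempty]) (rule emp_risk_nonneg)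

lemma emp_Lmin_le_ln2: "\<omega> \<in> space M \<Longrightarrow> 0 < n \<Longrightarrow> emp_Lmin n p \<omega> \<le> ln 2"
  using emp_Lmin_le[where \<omega> = \<omega> and \<theta> = "\<lambda>_. 0" and p = p and n = n] zero_in_ball1[of r d p q] r
  by (simp add: emp_risk_def lin_pred_def logloss_zero)

lemma pen_ge: "0 < n \<Longrightarrow> C_pen / real n powr \<rho> * sqrt (real p + 1) \<le> pen_n n p"
proof -
  assume "0 < n"
  have "real p + 1 \<le> real (sd d p)" using Suc_le_sd[OF d, of p] by simp
  also have "\<dots> \<le> real (sd d p) * exp (real q)" by (simp add: mult_le_cancel_left1)
  finally have "real p + 1 \<le> real (sd d p) * exp (real q)" .
  then have "C_pen * sqrt (real p + 1) \<le> C_pen * sqrt (real (sd d p) * exp (real q))"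
    using C_pen by (intro mult_left_mono real_sqrt_le_mono) auto
  then show ?thesis unfolding pen_def using \<open>0 < n\<close> by (simp add: divide_right_mono mult.commute)
qed

text \<open>The penalty grows like sqrt p while the empirical risk stays in [0, ln 2], so only finitely
  many orders compete and a minimizer of the penalized criterion exists.\<close>

lemma ex_penalized_minimizer:
  assumes \<omega>: "\<omega> \<in> space M" and "0 < n"
  shows "\<exists>p0. \<forall>p'. emp_Lmin n p0 \<omega> + pen_n n p0 \<le> emp_Lmin n p' \<omega> + pen_n n p'"
proof -
  define f where "f p = emp_Lmin n p \<omega> + pen_n n p" for p
  define c where "c = C_pen / real n powr \<rho>"
  have "0 < c" using C_pen \<open>0 < n\<close> by (simp add: c_def)
  define N where "N = nat \<lceil>((ln 2 + pen_n n 0) / c)\<^sup>2\<rceil>"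
  have large: "f 0 < f p" if "N < p" for p
  proof -
    have "(ln 2 + pen_n n 0) / c \<le> sqrt (((ln 2 + pen_n n 0) / c)\<^sup>2)" by (rule real_le_rsqrt) simp
    also have "\<dots> < sqrt (real p + 1)"
      using that by (intro real_sqrt_less_mono) (simp add: N_def; linarith)
    finally have "ln 2 + pen_n n 0 < c * sqrt (real p + 1)"
      using \<open>0 < c\<close> by (simp add: pos_divide_less_eq mult.commute)
    moreover have "f 0 \<le> ln 2 + pen_n n 0" using emp_Lmin_le_ln2[OF \<omega> \<open>0 < n\<close>] by (simp add: f_def)
    moreover have "c * sqrt (real p + 1) \<le> f p"
      using pen_ge[OF \<open>0 < n\<close>, of p] emp_Lmin_nonneg[OF \<omega>, of n p] by (simp add: f_def c_def)
    ultimately show ?thesis by linarith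
  qed
  obtain m where m: "m \<in> f ` {..N}" "\<not> (\<exists>x\<in>f ` {..N}. x < m)"
    using ex_min_if_finite[of "f ` {..N}"] by auto
  then obtain p0 where "p0 \<le> N" "m = f p0" by auto
  then have le: "f p0 \<le> f p" if "p \<le> N" for p using m(2) that by force
  have "f p0 \<le> f p" for p using le[of p] le[of 0] large[of p] by (cases "p \<le> N") auto
  then show ?thesis unfolding f_def by blast
qed

lemma p_hat_minimizes:
  "\<omega> \<in> space M \<Longrightarrow> 0 < n \<Longrightarrow> emp_Lmin n (phat n \<omega>) \<omega> + pen_n n (phat n \<omega>) \<le> emp_Lmin n p \<omega> + pen_n n p"
  using LeastI_ex[OF ex_penalized_minimizer] unfolding p_hat_def by blast

lemma emp_risk_ge_tangent:
  assumes "\<omega> \<in> space M"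
  shows "sample_mean n (obs_loss d T (idx d p q) \<theta>p) \<omega>
          + (\<Sum>x\<in>idx d p q. (\<theta> x - \<theta>p x) * sample_mean n (obs_grad d T (idx d p q) \<theta>p x) \<omega>)
         \<le> emp_R n p \<theta> \<omega>"
proof -
  let ?S = "idx d p q"
  have "(\<Sum>i<n. obs_loss d T ?S \<theta>p (Zs i \<omega>))
        + (\<Sum>x\<in>?S. (\<theta> x - \<theta>p x) * (\<Sum>i<n. obs_grad d T ?S \<theta>p x (Zs i \<omega>)))
      = (\<Sum>i<n. obs_loss d T ?S \<theta>p (Zs i \<omega>) + (\<Sum>x\<in>?S. (\<theta> x - \<theta>p x) * obs_grad d T ?S \<theta>p x (Zs i \<omega>)))"
    by (simp add: sum.distrib sum_distrib_left sum.swap[of _ ?S])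
  also have "\<dots> \<le> (\<Sum>i<n. obs_loss d T ?S \<theta> (Zs i \<omega>))"
    by (intro sum_mono obs_loss_ge_tangent)
  finally have "((\<Sum>i<n. obs_loss d T ?S \<theta>p (Zs i \<omega>))
        + (\<Sum>x\<in>?S. (\<theta> x - \<theta>p x) * (\<Sum>i<n. obs_grad d T ?S \<theta>p x (Zs i \<omega>)))) / n
      \<le> (\<Sum>i<n. obs_loss d T ?S \<theta> (Zs i \<omega>)) / n"
    by (rule divide_right_mono) simp
  moreover have "((\<Sum>i<n. obs_loss d T ?S \<theta>p (Zs i \<omega>))
        + (\<Sum>x\<in>?S. (\<theta> x - \<theta>p x) * (\<Sum>i<n. obs_grad d T ?S \<theta>p x (Zs i \<omega>)))) / n
      = sample_mean n (obs_loss d T ?S \<theta>p) \<omega>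
        + (\<Sum>x\<in>?S. (\<theta> x - \<theta>p x) * sample_mean n (obs_grad d T ?S \<theta>p x) \<omega>)"
    by (simp add: add_divide_distrib sum_divide_distrib times_divide_eq_right[symmetric]
        del: times_divide_eq_right)
  ultimately show ?thesis unfolding emp_risk_eq[OF assms] by linarith
qed

text \<open>First-order optimality of the population minimizer turns accurate sample means at that
  single point into a lower bound on the empirical risk over the whole ball.\<close>

lemma emp_Lmin_ge_of_concentrated:
  assumes \<omega>: "\<omega> \<in> space M" and \<theta>p: "\<theta>p \<in> ball1 d p q r" "R p \<theta>p = Lmin p" and "0 \<le> b"
    and loss: "Lmin p - a \<le> sample_mean n (obs_loss d T (idx d p q) \<theta>p) \<omega>"
    and grad: "\<And>x. x \<in> idx d p q \<Longrightarrow>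
      \<bar>sample_mean n (obs_grad d T (idx d p q) \<theta>p x) \<omega>
        - expectation (\<lambda>\<omega>. obs_grad d T (idx d p q) \<theta>p x (Z \<omega>))\<bar> \<le> b"
  shows "Lmin p - a - 2 * r * b \<le> emp_Lmin n p \<omega>"
  unfolding emp_L_def
proof (rule cINF_greatest[OF ball1_nonempty])
  fix \<theta> assume \<theta>: "\<theta> \<in> ball1 d p q r"
  let ?S = "idx d p q"
  let ?g = "\<lambda>x. sample_mean n (obs_grad d T ?S \<theta>p x) \<omega>"
    and ?G = "\<lambda>x. expectation (\<lambda>\<omega>. obs_grad d T ?S \<theta>p x (Z \<omega>))"
  have "\<bar>\<Sum>x\<in>?S. (\<theta> x - \<theta>p x) * (?g x - ?G x)\<bar> \<le> (\<Sum>x\<in>?S. \<bar>\<theta> x - \<theta>p x\<bar>) * b"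
    using grad \<open>0 \<le> b\<close> by (intro abs_sum_mult_le) auto
  also have "\<dots> \<le> 2 * r * b" using ball1_dist_le[OF \<theta> \<theta>p(1)] \<open>0 \<le> b\<close> by (rule mult_right_mono)
  finally have "- (2 * r * b) \<le> (\<Sum>x\<in>?S. (\<theta> x - \<theta>p x) * (?g x - ?G x))" by linarith
  moreover have "(\<Sum>x\<in>?S. (\<theta> x - \<theta>p x) * ?g x)
      = (\<Sum>x\<in>?S. (\<theta> x - \<theta>p x) * ?G x) + (\<Sum>x\<in>?S. (\<theta> x - \<theta>p x) * (?g x - ?G x))"
    by (simp add: sum.distrib[symmetric] algebra_simps)
  ultimately show "Lmin p - a - 2 * r * b \<le> emp_R n p \<theta> \<omega>"
    using first_order_optimality[OF \<theta>p \<theta>]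
      emp_risk_ge_tangent[OF \<omega>, where n = n and p = p and \<theta>p = \<theta>p and \<theta> = \<theta>] loss
    by linarith
qed

lemma p_hat_eq_imp_deviation:
  assumes \<omega>: "\<omega> \<in> space M" "0 < n" "phat n \<omega> = p"
    and \<theta>p: "\<theta>p \<in> ball1 d p q r" "R p \<theta>p = Lmin p" and \<theta>': "\<theta>' \<in> ball1 d p' q r"
    and \<Delta>: "\<Delta> = Lmin p - Lmin p' - pen_n n p' + pen_n n p" "0 < \<Delta>"
  shows "sample_mean n (obs_loss d T (idx d p q) \<theta>p) \<omega> \<le> Lmin p - \<Delta> / 4 \<or>
    Lmin p' + \<Delta> / 4 \<le> sample_mean n (obs_loss d T (idx d p' q) \<theta>') \<omega> \<or>
    (\<exists>x\<in>idx d p q. \<Delta> / (4 * r) \<le> \<bar>sample_mean n (obs_grad d T (idx d p q) \<theta>p x) \<omega>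
                      - expectation (\<lambda>\<omega>. obs_grad d T (idx d p q) \<theta>p x (Z \<omega>))\<bar>)"
proof (rule ccontr)
  assume "\<not> ?thesis"
  then have loss: "Lmin p - \<Delta> / 4 \<le> sample_mean n (obs_loss d T (idx d p q) \<theta>p) \<omega>"
    and loss': "sample_mean n (obs_loss d T (idx d p' q) \<theta>') \<omega> < Lmin p' + \<Delta> / 4"
    and grad: "\<And>x. x \<in> idx d p q \<Longrightarrow>
      \<bar>sample_mean n (obs_grad d T (idx d p q) \<theta>p x) \<omega>
        - expectation (\<lambda>\<omega>. obs_grad d T (idx d p q) \<theta>p x (Z \<omega>))\<bar> \<le> \<Delta> / (4 * r)"
    by auto
  have "Lmin p - \<Delta> / 4 - 2 * r * (\<Delta> / (4 * r)) \<le> emp_Lmin n p \<omega>"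
    using \<Delta>(2) r by (intro emp_Lmin_ge_of_concentrated[OF \<omega>(1) \<theta>p _ loss grad]) auto
  moreover have "2 * r * (\<Delta> / (4 * r)) = \<Delta> / 2" using r by simp
  moreover have "emp_Lmin n p' \<omega> < Lmin p' + \<Delta> / 4"
    using emp_Lmin_le[OF \<omega>(1) \<theta>', of n] loss' by (simp add: emp_risk_eq[OF \<omega>(1)])
  moreover have "emp_Lmin n p \<omega> + pen_n n p \<le> emp_Lmin n p' \<omega> + pen_n n p'"
    using p_hat_minimizes[OF \<omega>(1,2), of p'] \<omega>(3) by simp
  ultimately show False using \<Delta> by linarith
qed

lemma prob_sample_mean_obs_loss:
  assumes "0 < n" "\<theta> \<in> ball1 d p q r" "0 \<le> \<epsilon>"
  shows "prob {\<omega> \<in> space M. sample_mean n (obs_loss d T (idx d p q) \<theta>) \<omega> \<le> R p \<theta> - \<epsilon>}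
           \<le> exp (- 2 * real n * \<epsilon>\<^sup>2 / (2 * r * B)\<^sup>2)"
    and "prob {\<omega> \<in> space M. R p \<theta> + \<epsilon> \<le> sample_mean n (obs_loss d T (idx d p q) \<theta>) \<omega>}
           \<le> exp (- 2 * real n * \<epsilon>\<^sup>2 / (2 * r * B)\<^sup>2)"
proof -
  have bnd: "AE \<omega> in M. obs_loss d T (idx d p q) \<theta> (Z \<omega>) \<in> {ln 2 - r * B..ln 2 + r * B}"
    using AE_good_Z
  proof eventually_elim
    case (elim \<omega>)
    have "\<bar>obs_loss d T (idx d p q) \<theta> (Z \<omega>) - ln 2\<bar> \<le> (\<Sum>x\<in>idx d p q. \<bar>\<theta> x\<bar>) * B"
      unfolding B_def by (rule obs_loss_bound[OF elim T_nonneg])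
    also have "\<dots> \<le> r * B" using assms(2) B_pos by (intro mult_right_mono) (auto simp: ball1_def)
    finally show ?case by (auto simp: abs_le_iff)
  qed
  have ab: "ln 2 - r * B < ln 2 + r * B" and width: "ln 2 + r * B - (ln 2 - r * B) = 2 * r * B"
    using r B_pos by simp_all
  note Hoeffding = Hoeffding_ineq_iid_copies[OF \<open>0 < n\<close> Zs_measurable Z_measurable indep_Zs distr_Zs
      obs_loss_measurable bnd ab \<open>0 \<le> \<epsilon>\<close>, unfolded width risk_eq[symmetric]]
  show "prob {\<omega> \<in> space M. sample_mean n (obs_loss d T (idx d p q) \<theta>) \<omega> \<le> R p \<theta> - \<epsilon>}
      \<le> exp (- 2 * real n * \<epsilon>\<^sup>2 / (2 * r * B)\<^sup>2)"
    by (rule Hoeffding(1))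
  show "prob {\<omega> \<in> space M. R p \<theta> + \<epsilon> \<le> sample_mean n (obs_loss d T (idx d p q) \<theta>) \<omega>}
      \<le> exp (- 2 * real n * \<epsilon>\<^sup>2 / (2 * r * B)\<^sup>2)"
    by (rule Hoeffding(2))
qed

lemma prob_sample_mean_obs_grad:
  assumes "0 < n" "x \<in> idx d p q" "0 \<le> \<epsilon>"
  shows "prob {\<omega> \<in> space M. \<epsilon> \<le> \<bar>sample_mean n (obs_grad d T S \<theta> x) \<omega>
                               - expectation (\<lambda>\<omega>. obs_grad d T S \<theta> x (Z \<omega>))\<bar>}
           \<le> 2 * exp (- 2 * real n * \<epsilon>\<^sup>2 / (2 * B)\<^sup>2)"
proof -
  have bnd: "AE \<omega> in M. obs_grad d T S \<theta> x (Z \<omega>) \<in> {- B..B}"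
    using AE_good_Z
  proof eventually_elim
    case (elim \<omega>)
    from obs_grad_bound[OF elim T_nonneg assms(2), of S \<theta>] show ?case by (auto simp: B_def abs_le_iff)
  qed
  have ab: "- B < B" and width: "B - - B = 2 * B" using B_pos by simp_all
  show ?thesis
    using Hoeffding_ineq_iid_copies(3)[OF \<open>0 < n\<close> Zs_measurable Z_measurable indep_Zs distr_Zs
        obs_grad_measurable bnd ab \<open>0 \<le> \<epsilon>\<close>] unfolding width .
qed

lemma prob_p_hat_eq_le:
  assumes "0 < n" and \<Delta>: "\<Delta> = Lmin p - Lmin p' - pen_n n p' + pen_n n p" "0 < \<Delta>"
  shows "prob {\<omega> \<in> space M. phat n \<omega> = p}
           \<le> (2 + 2 * real (card (idx d p q))) * exp (- 2 * real n * (\<Delta> / 4)\<^sup>2 / (2 * r * B)\<^sup>2)"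
proof -
  obtain \<theta>p where \<theta>p: "\<theta>p \<in> ball1 d p q r" "R p \<theta>p = Lmin p" using Lmin_attained by blast
  obtain \<theta>' where \<theta>': "\<theta>' \<in> ball1 d p' q r" "R p' \<theta>' = Lmin p'" using Lmin_attained by blast
  let ?S = "idx d p q" and ?e = "exp (- 2 * real n * (\<Delta> / 4)\<^sup>2 / (2 * r * B)\<^sup>2)"
  define E1 where "E1 = {\<omega> \<in> space M. sample_mean n (obs_loss d T ?S \<theta>p) \<omega> \<le> R p \<theta>p - \<Delta> / 4}"
  define E2 where "E2 = {\<omega> \<in> space M. R p' \<theta>' + \<Delta> / 4 \<le> sample_mean n (obs_loss d T (idx d p' q) \<theta>') \<omega>}"
  define E3 where "E3 x = {\<omega> \<in> space M. \<Delta> / (4 * r) \<le> \<bar>sample_mean n (obs_grad d T ?S \<theta>p x) \<omega>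
      - expectation (\<lambda>\<omega>. obs_grad d T ?S \<theta>p x (Z \<omega>))\<bar>}" for x
  have sets: "E1 \<in> events" "E2 \<in> events" "\<And>x. E3 x \<in> events"
    unfolding E1_def E2_def E3_def by measurable
  then have U3: "(\<Union>x\<in>?S. E3 x) \<in> events" using finite_idx by blast
  have "{\<omega> \<in> space M. phat n \<omega> = p} \<subseteq> E1 \<union> E2 \<union> (\<Union>x\<in>?S. E3 x)"
    using p_hat_eq_imp_deviation[OF _ \<open>0 < n\<close> _ \<theta>p \<theta>'(1) \<Delta>] \<theta>p(2) \<theta>'(2)
    by (auto simp: E1_def E2_def E3_def)
  then have "prob {\<omega> \<in> space M. phat n \<omega> = p} \<le> prob (E1 \<union> E2 \<union> (\<Union>x\<in>?S. E3 x))"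
    using sets U3 by (intro finite_measure_mono) auto
  also have "\<dots> \<le> prob (E1 \<union> E2) + prob (\<Union>x\<in>?S. E3 x)"
    using sets U3 by (intro measure_Un_le) auto
  also have "\<dots> \<le> prob E1 + prob E2 + (\<Sum>x\<in>?S. prob (E3 x))"
    using sets by (intro add_mono measure_Un_le measure_UNION_le finite_idx) auto
  also have "\<dots> \<le> ?e + ?e + (\<Sum>x\<in>?S. 2 * ?e)"
  proof (intro add_mono sum_mono)
    show "prob E1 \<le> ?e" "prob E2 \<le> ?e"
      unfolding E1_def E2_def using \<Delta>(2)
      by (intro prob_sample_mean_obs_loss \<open>0 < n\<close> \<theta>p(1) \<theta>'(1); simp)+
    show "prob (E3 x) \<le> 2 * ?e" if "x \<in> ?S" for x
    proof -
      have "- 2 * real n * (\<Delta> / (4 * r))\<^sup>2 / (2 * B)\<^sup>2 = - 2 * real n * (\<Delta> / 4)\<^sup>2 / (2 * r * B)\<^sup>2"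
        using r by (simp add: power_divide power_mult_distrib)
      then show ?thesis
        unfolding E3_def using prob_sample_mean_obs_grad[OF \<open>0 < n\<close> that, of "\<Delta> / (4 * r)"] \<Delta>(2) r
        by simp
    qed
  qed
  finally show ?thesis by (simp add: algebra_simps)
qed

lemma half_gap_le_margin:
  assumes \<theta>s: "\<theta>s \<in> ball1 d ps q r" "R ps \<theta>s = risk_inf" and "p < ps"
    and pen: "pen_n n ps \<le> (Lmin (ps - 1) - R ps \<theta>s) / 2"
  shows "(Lmin (ps - 1) - R ps \<theta>s) / 2 \<le> Lmin p - Lmin ps - pen_n n ps + pen_n n p"
proof -
  have "Lmin (ps - 1) \<le> Lmin p" using Lmin_antimono \<open>p < ps\<close> by simp
  moreover have "Lmin ps = R ps \<theta>s" by (rule Lmin_eq_risk[OF \<theta>s])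
  moreover have "0 \<le> pen_n n p" using C_pen by (simp add: pen_def)
  ultimately show ?thesis using pen field_sum_of_halves[of "Lmin (ps - 1) - R ps \<theta>s"] by linarith
qed

lemma prob_p_hat_eq_le_exp:
  assumes "0 < n" and \<Delta>: "\<Delta> = Lmin p - Lmin p' - pen_n n p' + pen_n n p" "0 < \<Delta>" and "p \<le> p'"
    and large: "real (sd d p' + q) * (432 * (2 * B) * r * sqrt pi)\<^sup>2 \<le> n * \<Delta>\<^sup>2"
    and c5: "c5 = 1 / (8 * r * (288 * (2 * B)\<^sup>2 * r + 2 * B))"
  shows "prob {\<omega> \<in> space M. phat n \<omega> = p} \<le> 148 * exp (- real n * (c5 / 4) * \<Delta>\<^sup>2)"
proof -
  have "prob {\<omega> \<in> space M. phat n \<omega> = p}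
      \<le> (2 + 2 * real (card (idx d p q))) * exp (- 2 * real n * (\<Delta> / 4)\<^sup>2 / (2 * r * B)\<^sup>2)"
    by (rule prob_p_hat_eq_le[OF \<open>0 < n\<close> \<Delta>])
  also have "2 * r * B = r * (2 * B)" by simp
  also have "(2 + 2 * real (card (idx d p q))) * exp (- 2 * real n * (\<Delta> / 4)\<^sup>2 / (r * (2 * B))\<^sup>2)
      \<le> 148 * exp (- real n * (c5 / 4) * \<Delta>\<^sup>2)"
    using B_pos card_idx_le[of d p q] sd_mono[OF \<open>p \<le> p'\<close>, of d]
    by (intro exp_tail_bound[OF _ r _ _ _ large c5]) auto
  finally show ?thesis .
qed

end

theorem proposition4:
  fixes M :: "'w measure"
    and X :: "'w \<Rightarrow> path" and z :: "'w \<Rightarrow> nat \<Rightarrow> real" and y :: "'w \<Rightarrow> real"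
    and Xs :: "nat \<Rightarrow> 'w \<Rightarrow> path" and zs :: "nat \<Rightarrow> 'w \<Rightarrow> nat \<Rightarrow> real" and ys :: "nat \<Rightarrow> 'w \<Rightarrow> real"
    and d q :: nat and T :: real and x0 :: "nat \<Rightarrow> real"
    and F :: "path \<Rightarrow> real" and \<gamma> :: "nat \<Rightarrow> real"
    and C_F C_\<gamma> C_X C_z r \<rho> C_pen :: real
    and pstar :: nat and \<theta>star :: "nat list + nat \<Rightarrow> real"
    and n p :: nat
    and C c5 :: real and L :: "nat \<Rightarrow> real" and n3 :: nat
  assumes M: "prob_space M"
    and T: "T > 0" and d: "d \<ge> 2" and q: "q \<ge> 1"
    and \<rho>: "0 < \<rho>" "\<rho> < 1/2" and Cpen: "C_pen > 0"
    \<comment> \<open>the random triple (X, z, y) and its i.i.d. copies\<close>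
    and X_meas: "X \<in> M \<rightarrow>\<^sub>M path_space" and z_meas: "z \<in> M \<rightarrow>\<^sub>M vec_space"
    and y_meas: "y \<in> borel_measurable M"
    and X_dom: "\<forall>\<omega>\<in>space M. X \<omega> \<in> path_dom d T x0"
    and y01: "\<forall>\<omega>\<in>space M. y \<omega> \<in> {0, 1}"
    and samples_meas: "\<forall>i. (\<lambda>\<omega>. ((Xs i \<omega>, zs i \<omega>), ys i \<omega>)) \<in> M \<rightarrow>\<^sub>M triple_space"
    and samples_indep: "prob_space.indep_vars M (\<lambda>_. triple_space) (\<lambda>i \<omega>. ((Xs i \<omega>, zs i \<omega>), ys i \<omega>)) UNIV"
    and samples_distr: "\<forall>i. distr M triple_space (\<lambda>\<omega>. ((Xs i \<omega>, zs i \<omega>), ys i \<omega>))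
                          = distr M triple_space (\<lambda>\<omega>. ((X \<omega>, z \<omega>), y \<omega>))"
    and Xs_dom: "\<forall>i. \<forall>\<omega>\<in>space M. Xs i \<omega> \<in> path_dom d T x0"
    and ys01: "\<forall>i. \<forall>\<omega>\<in>space M. ys i \<omega> \<in> {0, 1}"
    \<comment> \<open>the logistic model: logit P(y = 1 | X, z) = F(X) + z^T gamma\<close>
    and F_cont: "cont_functional d T x0 F"
    and F_meas: "(\<lambda>\<omega>. F (X \<omega>)) \<in> borel_measurable M"
    and logit: "\<forall>A \<in> sets (path_space \<Otimes>\<^sub>M vec_space).
       measure M {\<omega> \<in> space M. y \<omega> = 1 \<and> (X \<omega>, z \<omega>) \<in> A}
       = (\<integral>\<omega>. indicator A (X \<omega>, z \<omega>) * sigmoid (F (X \<omega>) + (\<Sum>j<q. z \<omega> j * \<gamma> j)) \<partial>M)"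
    \<comment> \<open>(A.1)\<close>
    and A1_F: "\<exists>c < C_F. \<forall>Y \<in> path_dom d T x0. \<bar>F Y\<bar> \<le> c"
    and A1_\<gamma>: "(\<Sum>j<q. \<bar>\<gamma> j\<bar>) \<le> C_\<gamma>"
    \<comment> \<open>(A.2), for the triple and for its copies\<close>
    and A2: "AE \<omega> in M. tv d T (X \<omega>) < ereal C_X \<and> vnorm q (z \<omega>) < C_z"
    and A2s: "\<forall>i. AE \<omega> in M. tv d T (Xs i \<omega>) < ereal C_X \<and> vnorm q (zs i \<omega>) < C_z"
    \<comment> \<open>(A.4)\<close>
    and A4: "(INF G\<gamma> \<in> {(G, \<gamma>'). cont_functional d T x0 G \<and> (\<forall>Y\<in>path_dom d T x0. \<bar>G Y\<bar> \<le> C_F)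
                              \<and> (\<Sum>j<q. \<bar>\<gamma>' j\<bar>) \<le> C_\<gamma>}.
               \<integral>\<omega>. logloss (y \<omega>) (fst G\<gamma> (X \<omega>) + (\<Sum>j<q. z \<omega> j * snd G\<gamma> j)) \<partial>M)
            \<le> (INF p\<theta> \<in> (SIGMA p:UNIV. coef_space d p q). risk M X z y d T q (fst p\<theta>) (snd p\<theta>))"
    \<comment> \<open>(A.3)\<close>
    and r: "r > 0"
    and A3_attain: "\<theta>star \<in> ball1 d pstar q r"
    and A3_opt: "risk M X z y d T q pstar \<theta>star
                   = (INF p\<theta> \<in> (SIGMA p:UNIV. coef_space d p q). risk M X z y d T q (fst p\<theta>) (snd p\<theta>))"
    and A3_min: "\<forall>p' < pstar. \<not> (\<exists>\<theta> \<in> ball1 d p' q r. risk M X z y d T q p' \<theta>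
                   = (INF p\<theta> \<in> (SIGMA p:UNIV. coef_space d p q). risk M X z y d T q (fst p\<theta>) (snd p\<theta>)))"
    and C_def: "C = 2 * (C_z + exp (C_X + T))"
    and L_def: "L = (\<lambda>p. (INF \<theta> \<in> ball1 d p q r. risk M X z y d T q p \<theta>))"
    and c5_def: "c5 = 1 / (8 * r * (288 * C\<^sup>2 * r + C))"
    and n3_def: "n3 = nat \<lceil>((2 * sqrt (real (sd d pstar + q)) / (L (pstar - 1) - risk M X z y d T q pstar \<theta>star))
                      * (sqrt (exp (real q)) * C_pen + 432 * C * r * sqrt pi)) powr (1 / \<rho>)\<rceil>"
    and p: "p < pstar" and n: "n \<ge> n3"
  shows "measure M {\<omega> \<in> space M. p_hat Xs zs ys d T q r C_pen \<rho> n \<omega> = p}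
           \<le> 148 * exp (- real n * (c5 / 4) *
                 (L p - L pstar - pen C_pen \<rho> d n pstar q + pen C_pen \<rho> d n p q)\<^sup>2)"
proof -
  have "1 \<le> d" using d by simp
  interpret logistic_signature_model M X z y Xs zs ys d q T x0 C_X C_z r C_pen \<rho>
    by (rule logistic_signature_model.intro[OF M T \<open>1 \<le> d\<close> X_meas z_meas y_meas X_dom y01
          samples_meas samples_indep samples_distr Xs_dom ys01 A2 r Cpen])
  have L_eq: "L = Lmin" and C_eq: "C = 2 * B" by (simp_all add: L_def Lmin_def fun_eq_iff C_def B_def)
  have Rs: "risk M X z y d T q pstar \<theta>star = risk_inf" using A3_opt by (simp add: risk_inf_def)
  define gap where "gap = L (pstar - 1) - risk M X z y d T q pstar \<theta>star"
  have "0 < gap"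
    using risk_lt_Lmin_pred[OF A3_attain Rs] A3_min p by (simp add: gap_def L_eq risk_inf_def)
  have "0 < 432 * C * r * sqrt pi" using B_pos r by (simp add: C_eq)
  note sample_size = sample_size_bounds[OF \<open>0 < gap\<close> this Cpen \<rho> n[unfolded n3_def, folded gap_def]]
  define \<Delta> where "\<Delta> = Lmin p - Lmin pstar - pen C_pen \<rho> d n pstar q + pen C_pen \<rho> d n p q"
  have "gap / 2 \<le> \<Delta>"
    using half_gap_le_margin[OF A3_attain Rs p] sample_size(2) by (simp add: \<Delta>_def gap_def L_eq)
  then have "n * (gap / 2)\<^sup>2 \<le> n * \<Delta>\<^sup>2" using \<open>0 < gap\<close> by (intro mult_left_mono power_mono) auto
  with sample_size(3) have "real (sd d pstar + q) * (432 * (2 * B) * r * sqrt pi)\<^sup>2 \<le> n * \<Delta>\<^sup>2"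
    by (simp add: C_eq)
  from prob_p_hat_eq_le_exp[OF sample_size(1) \<Delta>_def _ less_imp_le[OF p] this c5_def[unfolded C_eq]]
  show ?thesis using \<open>gap / 2 \<le> \<Delta>\<close> \<open>0 < gap\<close> by (simp add: \<Delta>_def L_eq)
qed

end
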